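(* Let $M^n$ ($n \geq 2$) be a compact connected manifold without boundary and $f: M^n \rightarrow M^n$ a Morse-Smale diffeomorphism with an attractor periodic point $p$ and a repeller periodic point $q$, and let $x \in W^s(p) \cap W^u(q) \neq \emptyset$. If there is an arc $\gamma \subset W^s(p) \cap W^u(q)$ whose end points are $x$ and $f(x)$, then the induced continuum map $C(f)$ has uncountably many homoclinic points in $\Omega(C(f))$.
   Context: A $C^r$ diffeomorphism ($r\ge1$) is Morse-Smale if its nonwandering set consists of finitely many periodic points, all hyperbolic, with mutually transversal stable and unstable manifolds; $W^s(p)$, $W^u(q)$ denote stable and unstable manifolds. $C(M^n)$ is the hyperspace of nonempty compact connected subsets with the Hausdorff metric and $C(f)(A)=f(A)$; $\Omega(C(f))$ is its nonwandering set. A point $K\in C(M^n)$ is a homoclinic point of $C(f)$ if there is a fixed point $P\ne K$ of $C(f)$ with $C(f)^n(K)\to P$ both as $n\to+\infty$ and as $n\to-\infty$. *)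

theory Defs
  imports "HOL-Analysis.Analysis"
begin

definition C1_map_on :: "'x::euclidean_space set \<Rightarrow> ('x \<Rightarrow> 'y::real_normed_vector) \<Rightarrow> bool" where
  "C1_map_on S g \<longleftrightarrow> (\<exists>D :: 'x \<Rightarrow> ('x \<Rightarrow>\<^sub>L 'y).
      (\<forall>u\<in>S. (g has_derivative blinfun_apply (D u)) (at u)) \<and> continuous_on S D)"

text \<open>A local C^1 parametrisation (inverse chart) of M, modelled on the Euclidean space 'm:
  a C^1 immersion of an open set V of 'm which is a homeomorphism onto an open subset of M.\<close>
definition chart_param ::
    "'a::euclidean_space set \<Rightarrow> ('m::euclidean_space \<Rightarrow> 'a) \<Rightarrow> 'm set \<Rightarrow> bool" where
  "chart_param M \<phi> V \<longleftrightarrow> open V \<and>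
     (\<exists>D :: 'm \<Rightarrow> ('m \<Rightarrow>\<^sub>L 'a).
        (\<forall>u\<in>V. (\<phi> has_derivative blinfun_apply (D u)) (at u)) \<and> continuous_on V D \<and>
        (\<forall>u\<in>V. inj (blinfun_apply (D u)))) \<and>
     \<phi> ` V \<subseteq> M \<and> openin (top_of_set M) (\<phi> ` V) \<and>
     (\<exists>\<psi>. homeomorphism V (\<phi> ` V) \<phi> \<psi>)"

definition submanifold_without_boundary :: "'m::euclidean_space itself \<Rightarrow> 'a::euclidean_space set \<Rightarrow> bool" where
  "submanifold_without_boundary TYPE('m) M \<longleftrightarrow>
     (\<forall>x\<in>M. \<exists>(\<phi> :: 'm \<Rightarrow> 'a) V. chart_param M \<phi> V \<and> x \<in> \<phi> ` V)"

text \<open>Closed (compact, connected) n-manifold, n = DIM('m).\<close>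
definition closed_manifold :: "'m::euclidean_space itself \<Rightarrow> 'a::euclidean_space set \<Rightarrow> bool" where
  "closed_manifold TYPE('m) M \<longleftrightarrow> M \<noteq> {} \<and> compact M \<and> connected M \<and>
     submanifold_without_boundary TYPE('m) M"

definition C1_on_manifold :: "'m::euclidean_space itself \<Rightarrow> 'a::euclidean_space set \<Rightarrow> ('a \<Rightarrow> 'a) \<Rightarrow> bool" where
  "C1_on_manifold TYPE('m) M f \<longleftrightarrow> f ` M \<subseteq> M \<and>
     (\<forall>(\<phi> :: 'm \<Rightarrow> 'a) V. chart_param M \<phi> V \<longrightarrow> C1_map_on V (f \<circ> \<phi>))"

definition C1_diffeomorphism :: "'m::euclidean_space itself \<Rightarrow> 'a::euclidean_space set \<Rightarrow> ('a \<Rightarrow> 'a) \<Rightarrow> bool" where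
  "C1_diffeomorphism TYPE('m) M f \<longleftrightarrow> bij_betw f M M \<and>
     C1_on_manifold TYPE('m) M f \<and> C1_on_manifold TYPE('m) M (inv_into M f)"

definition tangent_curve :: "'a::euclidean_space set \<Rightarrow> 'a \<Rightarrow> 'a \<Rightarrow> (real \<Rightarrow> 'a) \<Rightarrow> bool" where
  "tangent_curve S x v \<gamma> \<longleftrightarrow> (\<exists>e>0. C1_map_on {-e<..<e} \<gamma> \<and> \<gamma> ` {-e<..<e} \<subseteq> S) \<and>
     \<gamma> 0 = x \<and> (\<gamma> has_vector_derivative v) (at 0)"

definition tangent_space :: "'a::euclidean_space set \<Rightarrow> 'a \<Rightarrow> 'a set" where
  "tangent_space S x = {v. \<exists>\<gamma>. tangent_curve S x v \<gamma>}"

definition tangent_map :: "'a::euclidean_space set \<Rightarrow> ('a \<Rightarrow> 'a) \<Rightarrow> 'a \<Rightarrow> 'a \<Rightarrow> 'a" where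
  "tangent_map M g x v = (THE w. \<exists>\<gamma>. tangent_curve M x v \<gamma> \<and> ((g \<circ> \<gamma>) has_vector_derivative w) (at 0))"

definition hyperbolic_splitting ::
    "'a::euclidean_space set \<Rightarrow> ('a \<Rightarrow> 'a) \<Rightarrow> 'a \<Rightarrow> nat \<Rightarrow> 'a set \<Rightarrow> 'a set \<Rightarrow> bool" where
  "hyperbolic_splitting M f p k Es Eu \<longleftrightarrow>
    (let L = tangent_map M (f ^^ k) p in
      subspace Es \<and> subspace Eu \<and> Es \<inter> Eu = {0} \<and>
      {a + b | a b. a \<in> Es \<and> b \<in> Eu} = tangent_space M p \<and>
      L ` Es \<subseteq> Es \<and> L ` Eu \<subseteq> Eu \<and>
      (\<exists>C \<mu>. C > 0 \<and> 0 < \<mu> \<and> \<mu> < 1 \<and>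
         (\<forall>m. \<forall>v\<in>Es. norm ((L ^^ m) v) \<le> C * \<mu> ^ m * norm v) \<and>
         (\<forall>m. \<forall>v\<in>Eu. norm v \<le> C * \<mu> ^ m * norm ((L ^^ m) v))))"

definition hyperbolic_periodic_point :: "'a::euclidean_space set \<Rightarrow> ('a \<Rightarrow> 'a) \<Rightarrow> 'a \<Rightarrow> bool" where
  "hyperbolic_periodic_point M f p \<longleftrightarrow> p \<in> M \<and>
     (\<exists>k>0. (f ^^ k) p = p \<and> (\<exists>Es Eu. hyperbolic_splitting M f p k Es Eu))"

definition attractor_periodic_point :: "'a::euclidean_space set \<Rightarrow> ('a \<Rightarrow> 'a) \<Rightarrow> 'a \<Rightarrow> bool" where
  "attractor_periodic_point M f p \<longleftrightarrow> p \<in> M \<and>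
     (\<exists>k>0. (f ^^ k) p = p \<and> (\<exists>Es. hyperbolic_splitting M f p k Es {0}))"

definition repeller_periodic_point :: "'a::euclidean_space set \<Rightarrow> ('a \<Rightarrow> 'a) \<Rightarrow> 'a \<Rightarrow> bool" where
  "repeller_periodic_point M f p \<longleftrightarrow> p \<in> M \<and>
     (\<exists>k>0. (f ^^ k) p = p \<and> (\<exists>Eu. hyperbolic_splitting M f p k {0} Eu))"

definition stable_set :: "'a::euclidean_space set \<Rightarrow> ('a \<Rightarrow> 'a) \<Rightarrow> 'a \<Rightarrow> 'a set" where
  "stable_set M f p = {y \<in> M. (\<lambda>n. dist ((f ^^ n) y) ((f ^^ n) p)) \<longlonglongrightarrow> 0}"

definition unstable_set :: "'a::euclidean_space set \<Rightarrow> ('a \<Rightarrow> 'a) \<Rightarrow> 'a \<Rightarrow> 'a set" where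
  "unstable_set M f p = stable_set M (inv_into M f) p"

definition nonwandering_set :: "'a::euclidean_space set \<Rightarrow> ('a \<Rightarrow> 'a) \<Rightarrow> 'a set" where
  "nonwandering_set M f = {x \<in> M. \<forall>U. openin (top_of_set M) U \<and> x \<in> U \<longrightarrow>
       (\<exists>n\<ge>1. (f ^^ n) ` U \<inter> U \<noteq> {})}"

definition transversal_at :: "'a::euclidean_space set \<Rightarrow> 'a set \<Rightarrow> 'a set \<Rightarrow> 'a \<Rightarrow> bool" where
  "transversal_at M A B x \<longleftrightarrow>
     {a + b | a b. a \<in> tangent_space A x \<and> b \<in> tangent_space B x} = tangent_space M x"

definition Morse_Smale :: "'m::euclidean_space itself \<Rightarrow> 'a::euclidean_space set \<Rightarrow> ('a \<Rightarrow> 'a) \<Rightarrow> bool" where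
  "Morse_Smale TYPE('m) M f \<longleftrightarrow> C1_diffeomorphism TYPE('m) M f \<and>
     finite (nonwandering_set M f) \<and>
     (\<forall>p\<in>nonwandering_set M f. hyperbolic_periodic_point M f p) \<and>
     (\<forall>p\<in>nonwandering_set M f. \<forall>q\<in>nonwandering_set M f.
        \<forall>x\<in>stable_set M f p \<inter> unstable_set M f q.
          transversal_at M (stable_set M f p) (unstable_set M f q) x)"

definition continua :: "'a::metric_space set \<Rightarrow> 'a set set" where
  "continua M = {A. A \<subseteq> M \<and> A \<noteq> {} \<and> compact A \<and> connected A}"

text \<open>Hausdorff distance between nonempty bounded sets.\<close>
definition hausdist :: "'a::metric_space set \<Rightarrow> 'a set \<Rightarrow> real" where
  "hausdist A B = max (SUP a\<in>A. infdist a B) (SUP b\<in>B. infdist b A)"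

definition continuum_nonwandering :: "'a::metric_space set \<Rightarrow> ('a \<Rightarrow> 'a) \<Rightarrow> 'a set set" where
  "continuum_nonwandering M f = {K \<in> continua M. \<forall>\<epsilon>>0. \<exists>n\<ge>1. \<exists>A\<in>continua M.
       hausdist A K < \<epsilon> \<and> hausdist ((f ^^ n) ` A) K < \<epsilon>}"

text \<open>Homoclinic point of C(f); backward iterates of C(f) are images under f^{-1}.\<close>
definition continuum_homoclinic :: "'a::metric_space set \<Rightarrow> ('a \<Rightarrow> 'a) \<Rightarrow> 'a set \<Rightarrow> bool" where
  "continuum_homoclinic M f K \<longleftrightarrow> K \<in> continua M \<and>
     (\<exists>P \<in> continua M. P \<noteq> K \<and> f ` P = P \<and>
        (\<lambda>n. hausdist ((f ^^ n) ` K) P) \<longlonglongrightarrow> 0 \<and>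
        (\<lambda>n. hausdist ((inv_into M f ^^ n) ` K) P) \<longlonglongrightarrow> 0)"

end

(* Let W be the intersection of W^s(p) and W^u(q). Hyperbolicity makes p a uniformly attracting
   fixed point of f and q one of its inverse; hence W is open in M, and under forward (backward)
   iteration its compact subsets converge uniformly to p (to q).
   The images of the arc gamma from x to f x under all iterates of f form a connected invariant set
   whose closure P adds only p and q, so P is an invariant continuum. Being a countable union of
   arcs and points, P has empty interior in a manifold of dimension at least 2 (Baire), so some arc
   alpha in W starts at x and leaves P. For every s after the last time alpha meets P, the
   continuum K_s = P union alpha[0,s] is homoclinic, since C(f)^n K_s tends to P in both time
   directions, and nonwandering, since adding a far backward image of alpha[0,s] moves K_s little
   while the corresponding forward image is K_s plus a far forward image of alpha[0,s]. The K_s are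
   pairwise distinct. *)
theory Submission
  imports Defs
begin

lemma funpow_fixpoint: "f x = x \<Longrightarrow> (f ^^ n) x = x"
  by (induction n) auto

lemma funpow_image_subset: "f ` M \<subseteq> M \<Longrightarrow> (f ^^ n) ` M \<subseteq> M"
  by (induction n) auto

lemma funpow_image_eq: "f ` P = P \<Longrightarrow> (f ^^ n) ` P = P"
proof (induction n)
  case (Suc n)
  then show ?case by (metis funpow.simps(2) image_comp)
qed simp

lemma continuous_on_funpow:
  assumes "continuous_on M f" "f ` M \<subseteq> M"
  shows "continuous_on M (f ^^ n)"
proof (induction n)
  case (Suc n)
  then show ?case
    using continuous_on_compose[OF Suc continuous_on_subset[OF assms(1) funpow_image_subset[OF assms(2)]]]
    by simp
qed (simp add: continuous_on_id)

lemma homeomorphism_funpow: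
  assumes "homeomorphism M M f g"
  shows "homeomorphism M M (f ^^ n) (g ^^ n)"
proof (induction n)
  case 0
  then show ?case by (simp add: homeomorphism_ident)
next
  case (Suc n)
  then show ?case
    using homeomorphism_compose[OF assms Suc] by (simp add: o_def funpow_swap1)
qed

section \<open>Uniformly attracting fixed points\<close>

text \<open>Consecutive points of the orbit of \<open>p\<close> shadow the orbits of \<open>y\<close> and \<open>h y\<close>, so their
  distance tends to 0; being periodic, it is 0.\<close>
lemma periodic_point_fixed_if_stable:
  assumes "k > 0" "(h ^^ k) p = p"
    and "y \<in> stable_set M h p" "h y \<in> stable_set M h p"
  shows "h p = p"
proof -
  define d where "d n = dist ((h ^^ Suc n) p) ((h ^^ n) p)" for n
  define b where "b n = dist ((h ^^ Suc n) y) ((h ^^ Suc n) p) + dist ((h ^^ n) (h y)) ((h ^^ n) p)" for n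
  have lim1: "(\<lambda>n. dist ((h ^^ Suc n) y) ((h ^^ Suc n) p)) \<longlonglongrightarrow> 0"
    using LIMSEQ_Suc[of "\<lambda>n. dist ((h ^^ n) y) ((h ^^ n) p)" 0] assms(3)
    by (simp add: stable_set_def del: funpow.simps)
  have lim2: "(\<lambda>n. dist ((h ^^ n) (h y)) ((h ^^ n) p)) \<longlonglongrightarrow> 0"
    using assms(4) by (simp add: stable_set_def)
  have "b \<longlonglongrightarrow> 0"
    unfolding b_def using tendsto_add[OF lim1 lim2] by simp
  moreover have "d n \<le> b n" for n
  proof -
    have "(h ^^ Suc n) y = (h ^^ n) (h y)"
      by (simp add: funpow_swap1)
    then show ?thesis
      unfolding d_def b_def by (metis dist_commute dist_triangle)
  qed
  ultimately have "d \<longlonglongrightarrow> 0"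
    by (intro real_tendsto_sandwich[of "\<lambda>_. 0" d sequentially b]) (auto simp: d_def)
  then have "(\<lambda>n. d (k * n)) \<longlonglongrightarrow> 0"
    using LIMSEQ_subseq_LIMSEQ[of d 0 "\<lambda>n. k * n"] assms(1) by (simp add: strict_mono_def o_def)
  moreover have "d (k * n) = d 0" for n
  proof -
    have "(h ^^ (k * n)) p = p"
      using funpow_fixpoint[of "h ^^ k" p n] assms(2) by (simp add: funpow_mult)
    then show ?thesis
      by (simp add: d_def)
  qed
  ultimately have "d 0 = 0"
    by (simp add: LIMSEQ_const_iff)
  then show ?thesis
    by (simp add: d_def)
qed

lemma stable_set_fixpoint_iff:
  assumes "h p = p"
  shows "y \<in> stable_set M h p \<longleftrightarrow> y \<in> M \<and> (\<lambda>n. (h ^^ n) y) \<longlonglongrightarrow> p"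
  using funpow_fixpoint[of h p, OF assms] tendsto_dist_iff[of "\<lambda>n. (h ^^ n) y" p sequentially]
  by (simp add: stable_set_def)

locale uniformly_attracting_nbhd =
  fixes M :: "'a::euclidean_space set" and h :: "'a \<Rightarrow> 'a" and p :: 'a and U :: "'a set"
  assumes maps_to: "h ` M \<subseteq> M" and cont: "continuous_on M h" and fixed: "h p = p"
    and nbhd: "openin (top_of_set M) U" "p \<in> U"
    and attracts: "uniform_limit U (\<lambda>n. h ^^ n) (\<lambda>_. p) sequentially"
begin

lemma stable_set_eq_Union_preimages:
  "stable_set M h p = (\<Union>n. M \<inter> (h ^^ n) -` U)"
proof (intro equalityI subsetI)
  fix y assume "y \<in> stable_set M h p"
  then have "y \<in> M" "(\<lambda>n. (h ^^ n) y) \<longlonglongrightarrow> p"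
    using stable_set_fixpoint_iff[of h p, OF fixed] by auto
  moreover obtain U' where "open U'" "U = M \<inter> U'"
    using nbhd(1) by (auto simp: openin_open)
  ultimately have "eventually (\<lambda>n. (h ^^ n) y \<in> U') sequentially"
    using nbhd(2) by (auto intro: topological_tendstoD)
  then obtain n where "(h ^^ n) y \<in> U'"
    by (auto simp: eventually_sequentially)
  then have "(h ^^ n) y \<in> U"
    using \<open>U = M \<inter> U'\<close> \<open>y \<in> M\<close> funpow_image_subset[OF maps_to] by blast
  then show "y \<in> (\<Union>n. M \<inter> (h ^^ n) -` U)"
    using \<open>y \<in> M\<close> by blast
next
  fix y assume "y \<in> (\<Union>n. M \<inter> (h ^^ n) -` U)"
  then obtain n where y: "y \<in> M" "(h ^^ n) y \<in> U"
    by blast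
  have "(\<lambda>m. (h ^^ m) ((h ^^ n) y)) \<longlonglongrightarrow> p"
    using tendsto_uniform_limitI[OF attracts y(2)] .
  then have "(\<lambda>m. (h ^^ (m + n)) y) \<longlonglongrightarrow> p"
    by (simp add: funpow_add)
  then have "(\<lambda>m. (h ^^ m) y) \<longlonglongrightarrow> p"
    by (rule LIMSEQ_offset)
  then show "y \<in> stable_set M h p"
    using y(1) stable_set_fixpoint_iff[of h p, OF fixed] by blast
qed

lemma openin_preimage_funpow: "openin (top_of_set M) (M \<inter> (h ^^ n) -` U)"
  using continuous_openin_preimage[OF continuous_on_funpow[OF cont maps_to] _ nbhd(1)]
    funpow_image_subset[OF maps_to] by blast

lemma openin_stable_set: "openin (top_of_set M) (stable_set M h p)"
  unfolding stable_set_eq_Union_preimages using openin_preimage_funpow by blast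

lemma uniform_limit_on_compact_stable:
  assumes "compact K" "K \<subseteq> stable_set M h p"
  shows "uniform_limit K (\<lambda>n. h ^^ n) (\<lambda>_. p) sequentially"
proof -
  obtain W where W: "\<And>n. open (W n)" "\<And>n. M \<inter> (h ^^ n) -` U = M \<inter> W n"
    using openin_preimage_funpow unfolding openin_open by metis
  have "K \<subseteq> (\<Union>n. W n)" "K \<subseteq> M"
    using assms(2) W(2) unfolding stable_set_eq_Union_preimages by blast+
  then obtain C where C: "finite C" "K \<subseteq> (\<Union>n\<in>C. W n)"
    using compactE_image[OF assms(1), of UNIV W] W(1) by metis
  show ?thesis
    unfolding uniform_limit_sequentially_iff
  proof (intro allI impI)
    fix e :: real assume "e > 0"
    then obtain N where N: "\<And>m y. m \<ge> N \<Longrightarrow> y \<in> U \<Longrightarrow> dist ((h ^^ m) y) p < e"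
      using attracts unfolding uniform_limit_sequentially_iff by blast
    have "dist ((h ^^ n) y) p < e" if n: "n \<ge> N + Max C" and y: "y \<in> K" for n y
    proof -
      obtain j where "j \<in> C" "y \<in> W j"
        using C(2) y by blast
      then have "(h ^^ j) y \<in> U" "j \<le> Max C"
        using W(2)[of j] \<open>K \<subseteq> M\<close> y C(1) by auto
      moreover have "(h ^^ n) y = (h ^^ ((n - j) + j)) y"
        using n \<open>j \<le> Max C\<close> by simp
      then have "(h ^^ n) y = (h ^^ (n - j)) ((h ^^ j) y)"
        by (simp add: funpow_add)
      ultimately show ?thesis
        using N[of "n - j"] n by simp
    qed
    then show "\<exists>N. \<forall>n\<ge>N. \<forall>y\<in>K. dist ((h ^^ n) y) p < e"
      by blast
  qed
qed

end

lemma uniform_limit_funpow_of_multiple: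
  fixes M :: "'a::metric_space set"
  assumes "h ` M \<subseteq> M" "continuous_on M h" "h p = p" "p \<in> M" "U \<subseteq> M" "a > 0"
    and lim: "uniform_limit U (\<lambda>n. h ^^ (a * n)) (\<lambda>_. p) sequentially"
  shows "uniform_limit U (\<lambda>n. h ^^ n) (\<lambda>_. p) sequentially"
  unfolding uniform_limit_sequentially_iff
proof (intro allI impI)
  fix e :: real assume "e > 0"
  have "\<exists>d>0. \<forall>z\<in>M. dist z p < d \<longrightarrow> dist ((h ^^ j) z) p < e" for j
    using continuous_on_funpow[OF assms(2,1), of j] assms(4) \<open>e > 0\<close> funpow_fixpoint[of h p, OF assms(3)]
    unfolding continuous_on_iff by metis
  then obtain d where d: "\<And>j. d j > 0" "\<And>j z. z \<in> M \<Longrightarrow> dist z p < d j \<Longrightarrow> dist ((h ^^ j) z) p < e"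
    by metis
  define d0 where "d0 = Min (d ` {..<a})"
  have "d0 > 0"
    unfolding d0_def using d(1) assms(6) by (subst Min_gr_iff) auto
  then obtain N where N: "\<And>n y. n \<ge> N \<Longrightarrow> y \<in> U \<Longrightarrow> dist ((h ^^ (a * n)) y) p < d0"
    using lim unfolding uniform_limit_sequentially_iff by blast
  have "dist ((h ^^ n) y) p < e" if n: "n \<ge> a * N" and y: "y \<in> U" for n y
  proof -
    have "N \<le> n div a"
      using n assms(6) by (metis div_le_mono div_mult_self1_is_m mult.commute)
    then have "dist ((h ^^ (a * (n div a))) y) p < d0"
      using N y by blast
    also have "d0 \<le> d (n mod a)"
      unfolding d0_def using assms(6) by (intro Min_le) auto
    finally have "dist ((h ^^ (a * (n div a))) y) p < d (n mod a)" .
    moreover have "(h ^^ (a * (n div a))) y \<in> M"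
      using funpow_image_subset[OF assms(1)] assms(5) y by blast
    ultimately have "dist ((h ^^ (n mod a)) ((h ^^ (a * (n div a))) y)) p < e"
      using d(2) by blast
    moreover have "(h ^^ n) y = (h ^^ (n mod a + a * (n div a))) y"
      by simp
    then have "(h ^^ n) y = (h ^^ (n mod a)) ((h ^^ (a * (n div a))) y)"
      by (simp only: funpow_add o_def)
    ultimately show ?thesis
      by simp
  qed
  then show "\<exists>N. \<forall>n\<ge>N. \<forall>y\<in>U. dist ((h ^^ n) y) p < e"
    by blast
qed

section \<open>Charts\<close>

lemma has_derivative_transform_nhds:
  assumes "(f has_derivative f') (at x)" "eventually (\<lambda>y. f y = g y) (nhds x)"
  shows "(g has_derivative f') (at x)"
proof -
  obtain S where "open S" "x \<in> S" "\<And>y. y \<in> S \<Longrightarrow> f y = g y"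
    using assms(2) unfolding eventually_nhds by blast
  then show ?thesis
    using has_derivative_transform_within_open[OF assms(1)] by blast
qed

lemma open_contains_line:
  fixes u :: "'a::real_normed_vector"
  assumes "open V" "u \<in> V"
  obtains e where "e > 0" "\<And>t. t \<in> {-e<..<e} \<Longrightarrow> u + t *\<^sub>R w \<in> V"
proof -
  have "open ((\<lambda>t::real. u + t *\<^sub>R w) -` V)"
    using assms(1) by (intro continuous_open_vimage) (auto intro!: continuous_intros)
  moreover have "(0::real) \<in> (\<lambda>t. u + t *\<^sub>R w) -` V"
    using assms(2) by simp
  ultimately obtain e where "e > 0" "ball 0 e \<subseteq> (\<lambda>t::real. u + t *\<^sub>R w) -` V"
    using open_contains_ball by blast
  moreover have "t \<in> ball 0 e" if "t \<in> {-e<..<e}" for t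
    using that by (simp add: dist_real_def abs_less_iff)
  ultimately show thesis
    using that by blast
qed

locale chart_at =
  fixes M :: "'a::euclidean_space set" and \<phi> :: "'m::euclidean_space \<Rightarrow> 'a"
    and V :: "'m set" and \<psi> :: "'a \<Rightarrow> 'm" and D :: "'m \<Rightarrow> ('m \<Rightarrow>\<^sub>L 'a)" and u0 :: 'm
  assumes open_V: "open V"
    and has_derivative_\<phi>: "\<And>u. u \<in> V \<Longrightarrow> (\<phi> has_derivative blinfun_apply (D u)) (at u)"
    and continuous_D: "continuous_on V D"
    and inj_D: "\<And>u. u \<in> V \<Longrightarrow> inj (blinfun_apply (D u))"
    and image_subset: "\<phi> ` V \<subseteq> M"
    and openin_image: "openin (top_of_set M) (\<phi> ` V)"
    and homeo: "homeomorphism V (\<phi> ` V) \<phi> \<psi>"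
    and base: "u0 \<in> V"
begin

abbreviation D\<phi> :: "'m \<Rightarrow> 'a" where "D\<phi> \<equiv> blinfun_apply (D u0)"

lemma linear_D\<phi>: "linear D\<phi>"
  using blinfun.bounded_linear_right bounded_linear.linear by blast

definition Pr :: "'a \<Rightarrow> 'm" where "Pr = (SOME P. linear P \<and> P \<circ> D\<phi> = id)"

lemma linear_Pr: "linear Pr" and Pr_D\<phi> [simp]: "Pr (D\<phi> w) = w"
proof -
  have "\<exists>P. linear P \<and> P \<circ> D\<phi> = id"
    using linear_injective_left_inverse[OF linear_D\<phi> inj_D[OF base]] by blast
  then have "linear Pr \<and> Pr \<circ> D\<phi> = id"
    unfolding Pr_def by (rule someI_ex)
  then show "linear Pr" "Pr (D\<phi> w) = w"
    by (auto simp: fun_eq_iff)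
qed

lemma bounded_linear_Pr: "bounded_linear Pr"
  using linear_Pr linear_conv_bounded_linear by blast

lemma D\<phi>_bounded_below:
  obtains B where "B > 0" "\<And>w. norm w \<le> B * norm (D\<phi> w)"
proof -
  obtain B where "B > 0" "\<And>z. norm (Pr z) \<le> B * norm z"
    using linear_bounded_pos[OF linear_Pr] by blast
  then show thesis
    using that[of B] Pr_D\<phi> by metis
qed

lemma D\<phi>_bounded:
  obtains B where "B > 0" "\<And>w. norm (D\<phi> w) \<le> B * norm w"
  using linear_bounded_pos[OF linear_D\<phi>] by blast

lemma \<psi>_\<phi> [simp]: "u \<in> V \<Longrightarrow> \<psi> (\<phi> u) = u"
  using homeo by (simp add: homeomorphism_def)

lemma \<phi>_\<psi> [simp]: "y \<in> \<phi> ` V \<Longrightarrow> \<phi> (\<psi> y) = y"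
  using homeo by (auto simp: homeomorphism_def)

lemma continuous_on_\<phi>: "continuous_on V \<phi>"
  using homeo by (simp add: homeomorphism_def)

lemma continuous_on_\<psi>: "continuous_on (\<phi> ` V) \<psi>"
  using homeo by (simp add: homeomorphism_def)

lemma onorm_projected_derivative_continuous:
  assumes "e > 0"
  shows "\<exists>d>0. \<forall>u. dist u0 u < d \<longrightarrow> onorm (\<lambda>v. (Pr \<circ> D u) v - (Pr \<circ> D u0) v) < e"
proof -
  obtain B where B: "B > 0" "\<And>z. norm (Pr z) \<le> B * norm z"
    using linear_bounded_pos[OF linear_Pr] by blast
  obtain d1 where d1: "d1 > 0" "ball u0 d1 \<subseteq> V"
    using open_V base open_contains_ball by blast
  obtain d2 where d2: "d2 > 0" "\<And>u. u \<in> V \<Longrightarrow> dist u u0 < d2 \<Longrightarrow> dist (D u) (D u0) < e / (2 * B)"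
    using continuous_D base assms B(1) unfolding continuous_on_iff
    by (metis divide_pos_pos mult_pos_pos zero_less_numeral)
  have "onorm (\<lambda>v. (Pr \<circ> D u) v - (Pr \<circ> D u0) v) < e" if "dist u0 u < min d1 d2" for u
  proof -
    have "u \<in> V"
      using that d1(2) by (auto simp: dist_commute)
    have "norm ((Pr \<circ> D u) v - (Pr \<circ> D u0) v) \<le> B * norm (D u - D u0) * norm v" for v
    proof -
      have "(Pr \<circ> D u) v - (Pr \<circ> D u0) v = Pr (blinfun_apply (D u - D u0) v)"
        by (simp add: linear_diff[OF linear_Pr] blinfun.diff_left)
      then show ?thesis
        using B(2) norm_blinfun[of "D u - D u0" v] B(1)
        by (metis (no_types, opaque_lifting) mult.assoc mult_left_mono order_trans less_imp_le)
    qed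
    then have "onorm (\<lambda>v. (Pr \<circ> D u) v - (Pr \<circ> D u0) v) \<le> B * norm (D u - D u0)"
      by (rule onorm_le)
    also have "\<dots> < B * (e / (2 * B))"
    proof -
      have "dist (D u) (D u0) < e / (2 * B)"
        using d2(2)[OF \<open>u \<in> V\<close>] that by (simp add: dist_commute)
      then show ?thesis
        unfolding dist_norm by (rule mult_strict_left_mono[OF _ B(1)])
    qed
    also have "\<dots> < e"
      using B(1) assms by simp
    finally show ?thesis .
  qed
  then show ?thesis
    using d1(1) d2(1) by (intro exI[of _ "min d1 d2"]) auto
qed

text \<open>\<open>Pr \<circ> \<phi>\<close> maps between spaces of equal dimension and has derivative the identity at the
  base point, so the inverse function theorem applies to it.\<close>
lemma projected_chart_local_inverse:
  obtains r \<Phi>' where "r > 0" "ball u0 r \<subseteq> V" "\<And>u. u \<in> ball u0 r \<Longrightarrow> \<Phi>' (Pr (\<phi> u)) = u"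
    "(\<Phi>' has_derivative id) (at (Pr (\<phi> u0)))"
proof -
  define \<Phi> where "\<Phi> = Pr \<circ> \<phi>"
  have der: "(\<Phi> has_derivative Pr \<circ> D u) (at u)" if "u \<in> V" for u
    unfolding \<Phi>_def using bounded_linear.has_derivative[OF bounded_linear_Pr has_derivative_\<phi>[OF that]]
    by (simp add: o_def)
  have "id \<circ> (Pr \<circ> D u0) = id"
    by (simp add: fun_eq_iff)
  then obtain r where r: "r > 0" "ball u0 r \<subseteq> V" "inj_on \<Phi> (ball u0 r)"
    using has_derivative_locally_injective[OF base open_V bounded_linear_ident[unfolded id_def[symmetric]]
        _ der onorm_projected_derivative_continuous] by blast
  define \<Phi>' where "\<Phi>' = inv_into (ball u0 r) \<Phi>"
  have "continuous_on (ball u0 r) \<Phi>"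
    using der r(2) by (meson continuous_at_imp_continuous_on has_derivative_continuous subsetD)
  moreover have "(\<Phi> has_derivative Pr \<circ> D u0) (at u0)" "(Pr \<circ> D u0) \<circ> id = id"
    using der base by (auto simp: fun_eq_iff)
  ultimately have "(\<Phi>' has_derivative id) (at (\<Phi> u0))"
    using has_derivative_inverse_strong[of "ball u0 r" u0 \<Phi> \<Phi>'] r(1,3)
    by (simp add: \<Phi>'_def inv_into_f_f)
  moreover have "\<Phi>' (Pr (\<phi> u)) = u" if "u \<in> ball u0 r" for u
    using inv_into_f_f[OF r(3) that] by (simp add: \<Phi>'_def \<Phi>_def)
  ultimately show thesis
    using that[of r \<Phi>'] r(1,2) by (simp add: \<Phi>_def)
qed

lemma eventually_in_chart_image:
  assumes "(\<eta> \<longlongrightarrow> \<phi> u0) F" "eventually (\<lambda>z. \<eta> z \<in> M) F"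
  shows "eventually (\<lambda>z. \<eta> z \<in> \<phi> ` V) F"
proof -
  obtain O' where O': "open O'" "\<phi> ` V = M \<inter> O'"
    using openin_image by (auto simp: openin_open)
  then have "eventually (\<lambda>z. \<eta> z \<in> O') F"
    using assms(1) base by (auto intro: topological_tendstoD)
  with assms(2) show ?thesis
    by eventually_elim (use O' in auto)
qed

lemma has_derivative_in_chart:
  fixes \<eta> :: "'b::real_normed_vector \<Rightarrow> 'a"
  assumes der: "(\<eta> has_derivative E) (at z0)" and eq: "\<eta> z0 = \<phi> u0"
    and evM: "eventually (\<lambda>z. \<eta> z \<in> M) (nhds z0)"
  shows "((\<lambda>z. \<psi> (\<eta> z)) has_derivative (\<lambda>w. Pr (E w))) (at z0)"
    and "\<And>w. D\<phi> (Pr (E w)) = E w"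
    and "eventually (\<lambda>z. \<eta> z \<in> \<phi> ` V) (nhds z0)"
proof -
  have lim: "(\<eta> \<longlongrightarrow> \<phi> u0) (nhds z0)"
    using has_derivative_continuous[OF der] eq by (simp add: isCont_def tendsto_nhds_iff)
  show evV: "eventually (\<lambda>z. \<eta> z \<in> \<phi> ` V) (nhds z0)"
    using eventually_in_chart_image[OF lim evM] .
  obtain r \<Phi>' where r: "r > 0" "ball u0 r \<subseteq> V" "\<And>u. u \<in> ball u0 r \<Longrightarrow> \<Phi>' (Pr (\<phi> u)) = u"
    and \<Phi>': "(\<Phi>' has_derivative id) (at (Pr (\<phi> u0)))"
    using projected_chart_local_inverse by blast
  have "((\<lambda>z. \<psi> (\<eta> z)) \<longlongrightarrow> \<psi> (\<phi> u0)) (nhds z0)"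
    using continuous_on_tendsto_compose[OF continuous_on_\<psi> lim _ evV] base by blast
  then have "eventually (\<lambda>z. \<psi> (\<eta> z) \<in> ball u0 r) (nhds z0)"
    by (rule topological_tendstoD) (use r(1) base in auto)
  then have ev_eq: "eventually (\<lambda>z. \<Phi>' (Pr (\<eta> z)) = \<psi> (\<eta> z) \<and> \<phi> (\<psi> (\<eta> z)) = \<eta> z) (nhds z0)"
    using evV by eventually_elim (use r(3) \<psi>_\<phi> in fastforce)
  have "((\<lambda>z. Pr (\<eta> z)) has_derivative (\<lambda>w. Pr (E w))) (at z0)"
    using bounded_linear.has_derivative[OF bounded_linear_Pr der] .
  then have "((\<lambda>z. \<Phi>' (Pr (\<eta> z))) has_derivative (\<lambda>w. Pr (E w))) (at z0)"
    using diff_chain_at[of "\<lambda>z. Pr (\<eta> z)" _ z0 \<Phi>' id] \<Phi>' eq by (simp add: o_def)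
  then show \<sigma>: "((\<lambda>z. \<psi> (\<eta> z)) has_derivative (\<lambda>w. Pr (E w))) (at z0)"
    by (rule has_derivative_transform_nhds) (use ev_eq in \<open>auto elim: eventually_mono\<close>)
  have "(\<phi> has_derivative D\<phi>) (at (\<psi> (\<eta> z0)))"
    using has_derivative_\<phi>[OF base] eq base by simp
  from diff_chain_at[OF \<sigma> this]
  have "((\<lambda>z. \<phi> (\<psi> (\<eta> z))) has_derivative (\<lambda>w. D\<phi> (Pr (E w)))) (at z0)"
    by (simp add: o_def)
  then have "(\<eta> has_derivative (\<lambda>w. D\<phi> (Pr (E w)))) (at z0)"
    by (rule has_derivative_transform_nhds) (use ev_eq in \<open>auto elim: eventually_mono\<close>)
  then show "\<And>w. D\<phi> (Pr (E w)) = E w"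
    using has_derivative_unique[OF der] by metis
qed

lemma tangent_curve_chart_line: "tangent_curve M (\<phi> u0) (D\<phi> w) (\<lambda>t. \<phi> (u0 + t *\<^sub>R w))"
proof -
  obtain e where e: "e > 0" and inV: "\<And>t. t \<in> {-e<..<e} \<Longrightarrow> u0 + t *\<^sub>R w \<in> V"
    using open_contains_line[OF open_V base] by blast
  have der: "((\<lambda>t. \<phi> (u0 + t *\<^sub>R w)) has_derivative (\<lambda>s. D (u0 + t *\<^sub>R w) (s *\<^sub>R w))) (at t)"
    if "u0 + t *\<^sub>R w \<in> V" for t
  proof -
    have "((\<lambda>t. u0 + t *\<^sub>R w) has_derivative (\<lambda>s. s *\<^sub>R w)) (at t)"
      by (auto intro!: derivative_eq_intros)
    from diff_chain_at[OF this has_derivative_\<phi>[OF that]] show ?thesis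
      by (simp add: o_def)
  qed
  have "C1_map_on {-e<..<e} (\<lambda>t. \<phi> (u0 + t *\<^sub>R w))"
    unfolding C1_map_on_def
  proof (intro exI[of _ "\<lambda>t. D (u0 + t *\<^sub>R w) o\<^sub>L blinfun_scaleR_left w"] conjI ballI)
    show "((\<lambda>t. \<phi> (u0 + t *\<^sub>R w)) has_derivative D (u0 + t *\<^sub>R w) o\<^sub>L blinfun_scaleR_left w) (at t)"
      if "t \<in> {-e<..<e}" for t
    proof -
      have "blinfun_apply (D (u0 + t *\<^sub>R w) o\<^sub>L blinfun_scaleR_left w) = (\<lambda>s. D (u0 + t *\<^sub>R w) (s *\<^sub>R w))"
        by (auto simp: fun_eq_iff blinfun_scaleR_left.rep_eq)
      then show ?thesis
        using der[OF inV[OF that]] by simp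
    qed
    have "continuous_on {-e<..<e} (\<lambda>t. D (u0 + t *\<^sub>R w))"
      by (rule continuous_on_compose2[OF continuous_D]) (auto intro!: continuous_intros simp: inV)
    then show "continuous_on {-e<..<e} (\<lambda>t. D (u0 + t *\<^sub>R w) o\<^sub>L blinfun_scaleR_left w)"
      by (auto intro!: continuous_intros)
  qed
  moreover have "(\<lambda>t. \<phi> (u0 + t *\<^sub>R w)) ` {-e<..<e} \<subseteq> M"
    using inV image_subset by blast
  moreover have "((\<lambda>t. \<phi> (u0 + t *\<^sub>R w)) has_vector_derivative D\<phi> w) (at 0)"
    unfolding has_vector_derivative_def using der[of 0] base
    by (simp add: linear_cmul[OF linear_D\<phi>])
  ultimately show ?thesis
    unfolding tangent_curve_def using e by auto
qed

lemma D\<phi>_in_tangent_space: "D\<phi> w \<in> tangent_space M (\<phi> u0)"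
  unfolding tangent_space_def using tangent_curve_chart_line by blast

lemma local_representation:
  assumes hM: "h ` M \<subseteq> M" and hp: "h (\<phi> u0) = \<phi> u0"
    and hder: "((\<lambda>u. h (\<phi> u)) has_derivative Bh) (at u0)"
  shows "((\<lambda>u. \<psi> (h (\<phi> u))) has_derivative (\<lambda>w. Pr (Bh w))) (at u0)"
    and "\<And>w. D\<phi> (Pr (Bh w)) = Bh w"
    and "eventually (\<lambda>u. h (\<phi> u) \<in> \<phi> ` V) (nhds u0)"
proof -
  have "eventually (\<lambda>u. h (\<phi> u) \<in> M) (nhds u0)"
    using eventually_nhds_in_open[OF open_V base] by eventually_elim (use hM image_subset in auto)
  then show "((\<lambda>u. \<psi> (h (\<phi> u))) has_derivative (\<lambda>w. Pr (Bh w))) (at u0)"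
    and "\<And>w. D\<phi> (Pr (Bh w)) = Bh w"
    and "eventually (\<lambda>u. h (\<phi> u) \<in> \<phi> ` V) (nhds u0)"
    using has_derivative_in_chart[OF hder] hp by auto
qed

lemma tangent_map_in_chart:
  assumes hM: "h ` M \<subseteq> M" and hp: "h (\<phi> u0) = \<phi> u0"
    and hder: "((\<lambda>u. h (\<phi> u)) has_derivative Bh) (at u0)"
    and v: "v \<in> tangent_space M (\<phi> u0)"
  shows "tangent_map M h (\<phi> u0) v = Bh (Pr v)"
proof -
  have curve: "((h \<circ> \<gamma>) has_vector_derivative Bh (Pr v)) (at 0)"
    if tc: "tangent_curve M (\<phi> u0) v \<gamma>" for \<gamma>
  proof -
    obtain e where e: "e > 0" "\<gamma> ` {-e<..<e} \<subseteq> M" and \<gamma>0: "\<gamma> 0 = \<phi> u0"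
      and "(\<gamma> has_vector_derivative v) (at 0)"
      using tc unfolding tangent_curve_def by blast
    then have \<gamma>': "(\<gamma> has_derivative (\<lambda>s. s *\<^sub>R v)) (at 0)"
      by (simp add: has_vector_derivative_def)
    have "eventually (\<lambda>t. \<gamma> t \<in> M) (nhds 0)"
      unfolding eventually_nhds_metric using e by (intro exI[of _ e]) (force simp: dist_real_def)
    note chart = has_derivative_in_chart[OF \<gamma>' \<gamma>0 this]
    have "((\<lambda>u. h (\<phi> u)) has_derivative Bh) (at (\<psi> (\<gamma> 0)))"
      using hder \<gamma>0 base by simp
    from diff_chain_at[OF chart(1) this]
    have "((\<lambda>t. h (\<phi> (\<psi> (\<gamma> t)))) has_derivative (\<lambda>s. Bh (Pr (s *\<^sub>R v)))) (at 0)"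
      by (simp add: o_def)
    then have "((h \<circ> \<gamma>) has_derivative (\<lambda>s. Bh (Pr (s *\<^sub>R v)))) (at 0)"
      by (rule has_derivative_transform_nhds) (use chart(3) in \<open>auto elim: eventually_mono\<close>)
    moreover have "linear Bh"
      using hder has_derivative_linear by blast
    ultimately show ?thesis
      unfolding has_vector_derivative_def by (simp add: linear_cmul[OF linear_Pr] linear_cmul)
  qed
  obtain \<gamma> where \<gamma>: "tangent_curve M (\<phi> u0) v \<gamma>"
    using v unfolding tangent_space_def by blast
  show ?thesis
    unfolding tangent_map_def
  proof (rule the_equality)
    show "\<exists>\<gamma>. tangent_curve M (\<phi> u0) v \<gamma> \<and> ((h \<circ> \<gamma>) has_vector_derivative Bh (Pr v)) (at 0)"
      using \<gamma> curve by blast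
    show "w' = Bh (Pr v)"
      if "\<exists>\<gamma>. tangent_curve M (\<phi> u0) v \<gamma> \<and> ((h \<circ> \<gamma>) has_vector_derivative w') (at 0)" for w'
      using that curve vector_derivative_unique_at by blast
  qed
qed

lemma has_derivative_comp_in_chart:
  assumes h1M: "h1 ` M \<subseteq> M" and h1p: "h1 (\<phi> u0) = \<phi> u0"
    and d1: "((\<lambda>u. h1 (\<phi> u)) has_derivative B1) (at u0)"
    and d2: "((\<lambda>u. h2 (\<phi> u)) has_derivative B2) (at u0)"
  shows "((\<lambda>u. h2 (h1 (\<phi> u))) has_derivative (\<lambda>w. B2 (Pr (B1 w)))) (at u0)"
proof -
  note rep = local_representation[OF h1M h1p d1]
  have "((\<lambda>u. h2 (\<phi> u)) has_derivative B2) (at (\<psi> (h1 (\<phi> u0))))"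
    using d2 h1p base by simp
  from diff_chain_at[OF rep(1) this]
  have "((\<lambda>u. h2 (\<phi> (\<psi> (h1 (\<phi> u))))) has_derivative (\<lambda>w. B2 (Pr (B1 w)))) (at u0)"
    by (simp add: o_def)
  then show ?thesis
    by (rule has_derivative_transform_nhds) (use rep(3) in \<open>auto elim: eventually_mono\<close>)
qed

lemma funpow_has_derivative_in_chart:
  assumes fM: "f ` M \<subseteq> M" and fp: "f (\<phi> u0) = \<phi> u0"
    and fder: "((\<lambda>u. f (\<phi> u)) has_derivative Bf) (at u0)"
  obtains B where "((\<lambda>u. (f ^^ n) (\<phi> u)) has_derivative B) (at u0)"
proof -
  have "\<exists>B. ((\<lambda>u. (f ^^ n) (\<phi> u)) has_derivative B) (at u0)"
  proof (induction n)
    case 0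
    show ?case
      using has_derivative_\<phi>[OF base] by auto
  next
    case (Suc n)
    then show ?case
      using has_derivative_comp_in_chart[OF funpow_image_subset[OF fM] funpow_fixpoint[of f, OF fp] _ fder]
      by auto
  qed
  then show thesis
    using that by blast
qed

lemma tangent_map_funpow_in_chart:
  assumes hM: "h ` M \<subseteq> M" and hp: "h (\<phi> u0) = \<phi> u0"
    and hder: "((\<lambda>u. h (\<phi> u)) has_derivative Bh) (at u0)"
  shows "(tangent_map M h (\<phi> u0) ^^ m) (D\<phi> w) = D\<phi> (((\<lambda>w. Pr (Bh w)) ^^ m) w)"
proof (induction m)
  case (Suc m)
  then show ?case
    using tangent_map_in_chart[OF hM hp hder D\<phi>_in_tangent_space] local_representation(2)[OF hM hp hder]
    by simp
qed simp

lemma local_representation_inverse: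
  assumes h1M: "h1 ` M \<subseteq> M" and h1p: "h1 (\<phi> u0) = \<phi> u0"
    and inv: "\<And>y. y \<in> M \<Longrightarrow> h2 (h1 y) = y"
    and d1: "((\<lambda>u. h1 (\<phi> u)) has_derivative B1) (at u0)"
    and d2: "((\<lambda>u. h2 (\<phi> u)) has_derivative B2) (at u0)"
  shows "Pr (B2 (Pr (B1 w))) = w"
proof -
  have "((\<lambda>u. h2 (h1 (\<phi> u))) has_derivative (\<lambda>w. B2 (Pr (B1 w)))) (at u0)"
    by (rule has_derivative_comp_in_chart[OF h1M h1p d1 d2])
  moreover have "eventually (\<lambda>u. h2 (h1 (\<phi> u)) = \<phi> u) (nhds u0)"
    using eventually_nhds_in_open[OF open_V base] by eventually_elim (use inv image_subset in auto)
  ultimately have "(\<phi> has_derivative (\<lambda>w. B2 (Pr (B1 w)))) (at u0)"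
    by (rule has_derivative_transform_nhds)
  then have "B2 (Pr (B1 w)) = D\<phi> w"
    using has_derivative_unique[OF has_derivative_\<phi>[OF base]] by metis
  then show ?thesis
    by simp
qed

end

lemma obtain_chart_at:
  fixes M :: "'a::euclidean_space set"
  assumes "submanifold_without_boundary TYPE('m) M" "y \<in> M"
  obtains \<phi> :: "'m::euclidean_space \<Rightarrow> 'a" and V \<psi> D u0
  where "chart_at M \<phi> V \<psi> D u0" "\<phi> u0 = y" "chart_param M \<phi> V"
proof -
  obtain \<phi> :: "'m \<Rightarrow> 'a" and V where cp: "chart_param M \<phi> V" "y \<in> \<phi> ` V"
    using assms unfolding submanifold_without_boundary_def by blast
  then obtain u0 where "u0 \<in> V" "\<phi> u0 = y"
    by blast
  moreover obtain D \<psi> where "open V" "\<forall>u\<in>V. (\<phi> has_derivative blinfun_apply (D u)) (at u)"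
    "continuous_on V D" "\<forall>u\<in>V. inj (blinfun_apply (D u))" "\<phi> ` V \<subseteq> M"
    "openin (top_of_set M) (\<phi> ` V)" "homeomorphism V (\<phi> ` V) \<phi> \<psi>"
    using cp(1) unfolding chart_param_def by blast
  ultimately have "chart_at M \<phi> V \<psi> D u0"
    by unfold_locales auto
  then show thesis
    using that cp(1) \<open>\<phi> u0 = y\<close> by blast
qed

lemma C1_on_manifold_has_derivative:
  fixes M :: "'a::euclidean_space set" and \<phi> :: "'m::euclidean_space \<Rightarrow> 'a"
  assumes "C1_on_manifold TYPE('m) M f" "chart_param M \<phi> V" "u \<in> V"
  obtains B where "((\<lambda>u. f (\<phi> u)) has_derivative B) (at u)"
  using assms unfolding C1_on_manifold_def C1_map_on_def o_def by blast

lemma continuous_on_C1_on_manifold: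
  fixes M :: "'a::euclidean_space set"
  assumes sm: "submanifold_without_boundary TYPE('m::euclidean_space) M"
    and C1: "C1_on_manifold TYPE('m) M f"
  shows "continuous_on M f"
  unfolding continuous_on_eq_continuous_within
proof
  fix y assume "y \<in> M"
  then obtain \<phi> :: "'m \<Rightarrow> 'a" and V \<psi> D u0
    where ch: "chart_at M \<phi> V \<psi> D u0" "\<phi> u0 = y" "chart_param M \<phi> V"
    by (rule obtain_chart_at[OF sm])
  interpret chart_at M \<phi> V \<psi> D u0
    by (rule ch(1))
  have "isCont (\<lambda>u. f (\<phi> u)) u" if "u \<in> V" for u
    using C1_on_manifold_has_derivative[OF C1 ch(3) that] has_derivative_continuous by metis
  then have "continuous_on (\<phi> ` V) ((\<lambda>u. f (\<phi> u)) \<circ> \<psi>)"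
    using continuous_on_compose[OF continuous_on_\<psi>] homeo continuous_at_imp_continuous_on
    by (metis homeomorphism_def)
  then have "continuous_on (\<phi> ` V) f"
    by (rule continuous_on_eq) simp
  moreover have "y \<in> \<phi> ` V"
    using ch(2) base by blast
  ultimately have "continuous (at y within \<phi> ` V) f"
    using continuous_on_eq_continuous_within by blast
  moreover obtain O' where "open O'" "\<phi> ` V = M \<inter> O'"
    using openin_image by (auto simp: openin_open)
  then have "at y within M = at y within \<phi> ` V"
    using \<open>y \<in> \<phi> ` V\<close> by (intro at_within_nhd[of y O']) auto
  ultimately show "continuous (at y within M) f"
    by simp
qed

section \<open>Sinks and sources\<close>

lemma has_derivative_funpow_fixpoint:
  assumes "(F has_derivative A) (at u0)" "F u0 = u0"
  shows "((F ^^ n) has_derivative (A ^^ n)) (at u0)"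
proof (induction n)
  case (Suc n)
  then show ?case
    using diff_chain_at[OF Suc, of F A] assms funpow_fixpoint[of F u0 n] by (simp add: o_def)
qed (simp add: has_derivative_ident id_def)

lemma exists_power_bound:
  fixes \<mu> :: real
  assumes "0 < \<mu>" "\<mu> < 1" "c > 0"
  obtains m where "m > 0" "C * \<mu> ^ m \<le> c"
proof -
  obtain m1 where m1: "\<mu> ^ m1 < c / (\<bar>C\<bar> + 1)"
    using real_arch_pow_inv[of "c / (\<bar>C\<bar> + 1)" \<mu>] assms by (auto simp: add_nonneg_pos)
  have "C * \<mu> ^ Suc m1 \<le> (\<bar>C\<bar> + 1) * \<mu> ^ m1"
    using assms(1,2) by (intro mult_mono) (auto simp: mult_left_le_one_le)
  also have "\<dots> \<le> (\<bar>C\<bar> + 1) * (c / (\<bar>C\<bar> + 1))"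
    using m1 by (intro mult_left_mono) auto
  also have "\<dots> = c"
    by (simp add: add_nonneg_pos)
  finally show thesis
    using that[of "Suc m1"] by blast
qed

lemma eventually_funpow_in_open:
  assumes "F u0 = u0" "(F has_derivative A) (at u0)" "open S" "u0 \<in> S"
  shows "eventually (\<lambda>u. \<forall>j\<le>m. (F ^^ j) u \<in> S) (nhds u0)"
proof -
  have "eventually (\<lambda>u. \<forall>j\<in>{..m}. (F ^^ j) u \<in> S) (nhds u0)"
  proof (rule eventually_ball_finite[OF finite_atMost], rule ballI)
    fix j
    have "isCont (F ^^ j) u0"
      using has_derivative_funpow_fixpoint[OF assms(2,1)] has_derivative_continuous by blast
    then show "eventually (\<lambda>u. (F ^^ j) u \<in> S) (nhds u0)"
      using assms(3,4) funpow_fixpoint[of F u0 j, OF assms(1)] unfolding isCont_def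
      by (auto intro: topological_tendstoD simp: tendsto_nhds_iff)
  qed
  then show ?thesis
    by (rule eventually_mono) auto
qed

lemma contracting_iterate_near_fixpoint:
  fixes F :: "'m::real_normed_vector \<Rightarrow> 'm"
  assumes fixed: "F u0 = u0" and der: "(F has_derivative A) (at u0)"
    and \<mu>: "0 < \<mu>" "\<mu> < 1" and bound: "\<And>m w. norm ((A ^^ m) w) \<le> C * \<mu> ^ m * norm w"
    and S: "open S" "u0 \<in> S"
  obtains m0 r where "m0 > 0" "r > 0" "\<And>u j. u \<in> ball u0 r \<Longrightarrow> j \<le> m0 \<Longrightarrow> (F ^^ j) u \<in> S"
    "\<And>u. u \<in> ball u0 r \<Longrightarrow> norm ((F ^^ m0) u - u0) \<le> norm (u - u0) / 2"
proof -
  obtain m0 where m0: "m0 > 0" "C * \<mu> ^ m0 \<le> 1 / 4"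
    using exists_power_bound[OF \<mu>, of "1 / 4"] by auto
  obtain d where d: "d > 0"
    "\<And>u. norm (u - u0) < d \<Longrightarrow> norm ((F ^^ m0) u - (F ^^ m0) u0 - (A ^^ m0) (u - u0)) \<le> 1 / 4 * norm (u - u0)"
    using has_derivative_funpow_fixpoint[OF der fixed, of m0] unfolding has_derivative_at_alt
    by (meson zero_less_divide_1_iff zero_less_numeral)
  obtain d' where d': "d' > 0" "\<And>u j. dist u u0 < d' \<Longrightarrow> j \<le> m0 \<Longrightarrow> (F ^^ j) u \<in> S"
    using eventually_funpow_in_open[OF fixed der S, of m0] unfolding eventually_nhds_metric by auto
  show thesis
  proof (rule that[of m0 "min d d'"])
    show "u \<in> ball u0 (min d d') \<Longrightarrow> j \<le> m0 \<Longrightarrow> (F ^^ j) u \<in> S" for u j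
      using d'(2) by (simp add: dist_commute)
    fix u assume "u \<in> ball u0 (min d d')"
    then have "norm (u - u0) < d"
      by (simp add: dist_norm norm_minus_commute)
    have "norm ((F ^^ m0) u - u0)
        \<le> norm ((A ^^ m0) (u - u0)) + norm ((F ^^ m0) u - u0 - (A ^^ m0) (u - u0))"
      by (rule norm_triangle_sub)
    also have "\<dots> \<le> 1 / 4 * norm (u - u0) + 1 / 4 * norm (u - u0)"
    proof (rule add_mono)
      show "norm ((A ^^ m0) (u - u0)) \<le> 1 / 4 * norm (u - u0)"
        using bound[of m0 "u - u0"] mult_right_mono[OF m0(2) norm_ge_zero[of "u - u0"]] by linarith
      show "norm ((F ^^ m0) u - u0 - (A ^^ m0) (u - u0)) \<le> 1 / 4 * norm (u - u0)"
        using d(2)[OF \<open>norm (u - u0) < d\<close>] funpow_fixpoint[of F u0 m0, OF fixed] by simp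
    qed
    finally show "norm ((F ^^ m0) u - u0) \<le> norm (u - u0) / 2"
      by simp
  qed (use d d' m0 in auto)
qed

lemma contracting_iterate_orbit:
  fixes F :: "'m::real_normed_vector \<Rightarrow> 'm"
  assumes "m0 > 0" "\<And>u j. u \<in> ball u0 r \<Longrightarrow> j \<le> m0 \<Longrightarrow> (F ^^ j) u \<in> S"
    and "\<And>u. u \<in> ball u0 r \<Longrightarrow> norm ((F ^^ m0) u - u0) \<le> norm (u - u0) / 2"
    and "u \<in> ball u0 r"
  shows "norm ((F ^^ (m0 * n)) u - u0) \<le> norm (u - u0) / 2 ^ n" "(F ^^ j) u \<in> S"
proof -
  have *: "(F ^^ (m0 * n)) u \<in> ball u0 r \<and> norm ((F ^^ (m0 * n)) u - u0) \<le> norm (u - u0) / 2 ^ n" for n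
  proof (induction n)
    case (Suc n)
    let ?v = "(F ^^ (m0 * n)) u"
    have "(F ^^ (m0 * Suc n)) u = (F ^^ m0) ?v"
      by (simp add: funpow_add)
    have a: "norm ((F ^^ m0) ?v - u0) \<le> norm (?v - u0) / 2"
      using assms(3) Suc by blast
    have b: "norm (?v - u0) < r" "norm (?v - u0) \<le> norm (u - u0) / 2 ^ n"
      using Suc by (simp_all add: dist_norm norm_minus_commute)
    have "norm ((F ^^ m0) ?v - u0) < r"
      using a b(1) norm_ge_zero[of "?v - u0"] by linarith
    moreover have "norm ((F ^^ m0) ?v - u0) \<le> norm (u - u0) / 2 ^ n / 2"
      using a divide_right_mono[OF b(2), of 2] by linarith
    ultimately have "norm ((F ^^ (m0 * Suc n)) u - u0) < r"
      "norm ((F ^^ (m0 * Suc n)) u - u0) \<le> norm (u - u0) / 2 ^ Suc n"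
      using \<open>(F ^^ (m0 * Suc n)) u = (F ^^ m0) ?v\<close> by (simp_all add: divide_divide_eq_left mult.commute)
    then show ?case
      by (simp add: dist_norm norm_minus_commute)
  qed (use assms(4) in simp)
  then show "norm ((F ^^ (m0 * n)) u - u0) \<le> norm (u - u0) / 2 ^ n"
    by blast
  have "(F ^^ j) u = (F ^^ (j mod m0)) ((F ^^ (m0 * (j div m0))) u)"
    by (metis funpow_add mult.commute div_mult_mod_eq o_apply add.commute)
  then show "(F ^^ j) u \<in> S"
    using assms(2)[of _ "j mod m0"] * assms(1) by (simp add: less_imp_le)
qed

lemma funpow_conjugate:
  assumes "\<And>v. v \<in> S \<Longrightarrow> \<phi> (F v) = h (\<phi> v)" "\<And>j. (F ^^ j) u \<in> S"
  shows "\<phi> ((F ^^ n) u) = (h ^^ n) (\<phi> u)"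
  using assms(2) by (induction n) (simp_all add: assms(1))

context chart_at
begin

lemma power_bound_in_chart:
  assumes "C \<ge> 0" "\<mu> > 0" "\<And>m w. norm (D\<phi> ((A ^^ m) w)) \<le> C * \<mu> ^ m * norm (D\<phi> w)"
  obtains C' where "\<And>m w. norm ((A ^^ m) w) \<le> C' * \<mu> ^ m * norm w"
proof -
  obtain B1 where B1: "B1 > 0" "\<And>w. norm w \<le> B1 * norm (D\<phi> w)"
    using D\<phi>_bounded_below by blast
  obtain B2 where B2: "B2 > 0" "\<And>w. norm (D\<phi> w) \<le> B2 * norm w"
    using D\<phi>_bounded by blast
  have "norm ((A ^^ m) w) \<le> (B1 * C * B2) * \<mu> ^ m * norm w" for m w
  proof -
    have "norm ((A ^^ m) w) \<le> B1 * norm (D\<phi> ((A ^^ m) w))"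
      by (rule B1(2))
    also have "\<dots> \<le> B1 * (C * \<mu> ^ m * norm (D\<phi> w))"
      using B1(1) assms(3)[of m w] by simp
    also have "\<dots> \<le> B1 * (C * \<mu> ^ m * (B2 * norm w))"
      using B1(1) B2(2)[of w] assms(1,2) by (intro mult_left_mono) auto
    finally show ?thesis
      by (simp add: algebra_simps)
  qed
  then show thesis
    using that by blast
qed

lemma local_conjugacy:
  assumes "h ` M \<subseteq> M" "h (\<phi> u0) = \<phi> u0" "((\<lambda>u. h (\<phi> u)) has_derivative Bh) (at u0)"
  obtains s where "s > 0" "ball u0 s \<subseteq> V" "\<And>u. u \<in> ball u0 s \<Longrightarrow> \<phi> (\<psi> (h (\<phi> u))) = h (\<phi> u)"
proof -
  have "eventually (\<lambda>u. u \<in> V \<and> h (\<phi> u) \<in> \<phi> ` V) (nhds u0)"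
    using eventually_nhds_in_open[OF open_V base] local_representation(3)[OF assms]
    by (rule eventually_conj)
  then obtain s where s: "s > 0" "\<And>u. u \<in> ball u0 s \<Longrightarrow> u \<in> V \<and> h (\<phi> u) \<in> \<phi> ` V"
    unfolding eventually_nhds_metric by (auto simp: dist_commute)
  then have "ball u0 s \<subseteq> V"
    by blast
  then show thesis
    using that s by simp
qed

lemma uniform_limit_through_chart:
  assumes "r > 0" "\<And>n u. u \<in> ball u0 r \<Longrightarrow> X n u \<in> V"
    and "\<And>n u. u \<in> ball u0 r \<Longrightarrow> norm (X n u - u0) \<le> r / 2 ^ n"
    and "\<And>n u. u \<in> ball u0 r \<Longrightarrow> Y n (\<phi> u) = \<phi> (X n u)"
  shows "uniform_limit (\<phi> ` ball u0 r) Y (\<lambda>_. \<phi> u0) sequentially"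
  unfolding uniform_limit_sequentially_iff
proof (intro allI impI)
  fix e :: real assume "e > 0"
  then obtain \<eta> where \<eta>: "\<eta> > 0" "\<And>v. v \<in> V \<Longrightarrow> dist v u0 < \<eta> \<Longrightarrow> dist (\<phi> v) (\<phi> u0) < e"
    using continuous_on_\<phi> base unfolding continuous_on_iff by metis
  obtain N where N: "r / 2 ^ N < \<eta>"
    using real_arch_pow_inv[of "\<eta> / r" "1 / 2"] \<eta>(1) assms(1) by (auto simp: field_simps)
  have "dist (Y n (\<phi> u)) (\<phi> u0) < e" if "n \<ge> N" "u \<in> ball u0 r" for n u
  proof -
    have "r / 2 ^ n \<le> r / 2 ^ N"
      using that assms(1) by (intro divide_left_mono) auto
    then have "dist (X n u) u0 < \<eta>"
      using assms(3)[OF that(2), of n] N by (simp add: dist_norm)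
    then show ?thesis
      using \<eta>(2) assms(2,4)[OF that(2)] by metis
  qed
  then show "\<exists>N. \<forall>n\<ge>N. \<forall>y\<in>\<phi> ` ball u0 r. dist (Y n y) (\<phi> u0) < e"
    by blast
qed

text \<open>The contraction estimate is given in the norm transported by \<open>D\<phi>\<close>, the one in which the
  hyperbolic splitting is stated.\<close>
lemma uniformly_attracting_iterate_of_contraction:
  assumes hM: "h ` M \<subseteq> M" and hp: "h (\<phi> u0) = \<phi> u0"
    and hder: "((\<lambda>u. h (\<phi> u)) has_derivative Bh) (at u0)"
    and \<mu>: "0 < \<mu>" "\<mu> < 1" and "C \<ge> 0"
    and contr: "\<And>m w. norm (D\<phi> (((\<lambda>w. Pr (Bh w)) ^^ m) w)) \<le> C * \<mu> ^ m * norm (D\<phi> w)"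
  obtains U a where "a > 0" "openin (top_of_set M) U" "\<phi> u0 \<in> U"
    "uniform_limit U (\<lambda>n. h ^^ (a * n)) (\<lambda>_. \<phi> u0) sequentially"
proof -
  define F where "F u = \<psi> (h (\<phi> u))" for u
  have F0: "F u0 = u0"
    using hp base by (simp add: F_def)
  have Fder: "(F has_derivative (\<lambda>w. Pr (Bh w))) (at u0)"
    using local_representation(1)[OF hM hp hder] by (simp add: F_def[abs_def])
  obtain C' where bound: "\<And>m w. norm (((\<lambda>w. Pr (Bh w)) ^^ m) w) \<le> C' * \<mu> ^ m * norm w"
    using power_bound_in_chart[OF \<open>C \<ge> 0\<close> \<mu>(1) contr] by blast
  obtain s where s: "s > 0" "ball u0 s \<subseteq> V" and conj: "\<And>v. v \<in> ball u0 s \<Longrightarrow> \<phi> (F v) = h (\<phi> v)"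
    using local_conjugacy[OF hM hp hder] unfolding F_def by blast
  obtain m0 r where m0: "m0 > 0" "r > 0" "\<And>u j. u \<in> ball u0 r \<Longrightarrow> j \<le> m0 \<Longrightarrow> (F ^^ j) u \<in> ball u0 s"
    "\<And>u. u \<in> ball u0 r \<Longrightarrow> norm ((F ^^ m0) u - u0) \<le> norm (u - u0) / 2"
    using contracting_iterate_near_fixpoint[OF F0 Fder \<mu> bound, of "ball u0 s"] s(1) by auto
  have orbit: "norm ((F ^^ (m0 * n)) u - u0) \<le> norm (u - u0) / 2 ^ n" "(F ^^ j) u \<in> ball u0 s"
    if "u \<in> ball u0 r" for u n j
    using contracting_iterate_orbit[of m0 u0 r F "ball u0 s" u, OF m0(1) m0(3) m0(4) that] by blast+
  have rV: "ball u0 r \<subseteq> V"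
    using m0(3)[of _ 0] s(2) by auto
  have "openin (top_of_set (\<phi> ` V)) (\<phi> ` ball u0 r)"
    using homeomorphism_imp_open_map[OF homeo open_subset[OF rV open_ball]] .
  then have "openin (top_of_set M) (\<phi> ` ball u0 r)"
    using openin_image openin_trans by blast
  moreover have "uniform_limit (\<phi> ` ball u0 r) (\<lambda>n. h ^^ (m0 * n)) (\<lambda>_. \<phi> u0) sequentially"
  proof (rule uniform_limit_through_chart[OF m0(2), of "\<lambda>n. F ^^ (m0 * n)"])
    fix n u assume u: "u \<in> ball u0 r"
    show "(F ^^ (m0 * n)) u \<in> V"
      using orbit(2)[OF u] s(2) by blast
    have "norm (u - u0) / 2 ^ n \<le> r / 2 ^ n"
      using u by (intro divide_right_mono) (auto simp: dist_norm norm_minus_commute)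
    then show "norm ((F ^^ (m0 * n)) u - u0) \<le> r / 2 ^ n"
      using orbit(1)[OF u, of n] by linarith
    show "(h ^^ (m0 * n)) (\<phi> u) = \<phi> ((F ^^ (m0 * n)) u)"
      using funpow_conjugate[of "ball u0 s" \<phi> F h u] conj orbit(2)[OF u] by metis
  qed
  moreover have "\<phi> u0 \<in> \<phi> ` ball u0 r"
    using m0(2) by simp
  ultimately show thesis
    using that m0(1) by blast
qed

end

lemma funpow_left_inverse:
  assumes "f ` M \<subseteq> M" "\<And>y. y \<in> M \<Longrightarrow> g (f y) = y" "y \<in> M"
  shows "(g ^^ k) ((f ^^ k) y) = y"
  using assms(3)
proof (induction k arbitrary: y)
  case (Suc k)
  have "(f ^^ k) y \<in> M"
    using Suc.prems funpow_image_subset[OF assms(1)] by blast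
  moreover have "(g ^^ Suc k) ((f ^^ Suc k) y) = (g ^^ k) (g (f ((f ^^ k) y)))"
    by (simp only: funpow_Suc_right[of k g] funpow.simps(2)[of k f] o_def)
  ultimately show ?case
    using Suc assms(2) by simp
qed simp

lemma funpow_right_inverse_linear:
  fixes A A' :: "'m::euclidean_space \<Rightarrow> 'm"
  assumes "linear A" "linear A'" "\<And>w. A' (A w) = w"
  shows "(A ^^ m) ((A' ^^ m) w) = w"
proof -
  have "A \<circ> A' = id"
    using linear_inverse_left[OF assms(1,2)] assms(3) by (simp add: fun_eq_iff)
  then show ?thesis
    by (induction m arbitrary: w) (simp_all add: funpow_swap1 fun_eq_iff)
qed

lemma hyperbolic_splitting_sink:
  assumes "hyperbolic_splitting M f p k Es {0}"
  obtains C \<mu> where "C > 0" "0 < \<mu>" "\<mu> < 1"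
    "\<And>m v. v \<in> tangent_space M p \<Longrightarrow> norm ((tangent_map M (f ^^ k) p ^^ m) v) \<le> C * \<mu> ^ m * norm v"
proof -
  have "tangent_space M p = Es"
    using assms unfolding hyperbolic_splitting_def Let_def by auto
  then show thesis
    using assms that unfolding hyperbolic_splitting_def Let_def by metis
qed

lemma hyperbolic_splitting_source:
  assumes "hyperbolic_splitting M f p k {0} Eu"
  obtains C \<mu> where "C > 0" "0 < \<mu>" "\<mu> < 1"
    "\<And>m v. v \<in> tangent_space M p \<Longrightarrow> norm v \<le> C * \<mu> ^ m * norm ((tangent_map M (f ^^ k) p ^^ m) v)"
proof -
  have "tangent_space M p = Eu"
    using assms unfolding hyperbolic_splitting_def Let_def by auto
  then show thesis
    using assms that unfolding hyperbolic_splitting_def Let_def by metis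
qed

context chart_at
begin

lemma attracting_iterate_at_sink:
  assumes fM: "f ` M \<subseteq> M" and fp: "f (\<phi> u0) = \<phi> u0"
    and fder: "((\<lambda>u. f (\<phi> u)) has_derivative Bf) (at u0)"
    and k: "k > 0" and hs: "hyperbolic_splitting M f (\<phi> u0) k Es {0}"
  obtains U a where "a > 0" "openin (top_of_set M) U" "\<phi> u0 \<in> U"
    "uniform_limit U (\<lambda>n. f ^^ (a * n)) (\<lambda>_. \<phi> u0) sequentially"
proof -
  define h where "h = f ^^ k"
  have hM: "h ` M \<subseteq> M" and hp: "h (\<phi> u0) = \<phi> u0"
    using funpow_image_subset[OF fM] funpow_fixpoint[of f, OF fp] by (simp_all add: h_def)
  obtain Bh where hder: "((\<lambda>u. h (\<phi> u)) has_derivative Bh) (at u0)"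
    using funpow_has_derivative_in_chart[OF fM fp fder] unfolding h_def by blast
  obtain C \<mu> where C\<mu>: "C > 0" "0 < \<mu>" "\<mu> < 1"
    and contr: "\<And>m v. v \<in> tangent_space M (\<phi> u0) \<Longrightarrow> norm ((tangent_map M h (\<phi> u0) ^^ m) v) \<le> C * \<mu> ^ m * norm v"
    using hyperbolic_splitting_sink[OF hs] unfolding h_def by blast
  have contr': "norm (D\<phi> (((\<lambda>w. Pr (Bh w)) ^^ m) w)) \<le> C * \<mu> ^ m * norm (D\<phi> w)" for m w
    using contr[OF D\<phi>_in_tangent_space, of m w] tangent_map_funpow_in_chart[OF hM hp hder] by simp
  obtain U a where "a > 0" "openin (top_of_set M) U" "\<phi> u0 \<in> U"
    "uniform_limit U (\<lambda>n. h ^^ (a * n)) (\<lambda>_. \<phi> u0) sequentially"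
    using uniformly_attracting_iterate_of_contraction[OF hM hp hder C\<mu>(2,3) less_imp_le[OF C\<mu>(1)] contr']
    by blast
  then show thesis
    using that[of "k * a" U] k by (simp add: h_def funpow_mult mult.assoc)
qed

text \<open>At a source, the inverse of the local representation contracts: the expansion estimate of
  the splitting, read backwards, is a contraction estimate for the inverse.\<close>
lemma attracting_inverse_iterate_at_source:
  assumes fM: "f ` M \<subseteq> M" and fp: "f (\<phi> u0) = \<phi> u0"
    and gM: "g ` M \<subseteq> M" and gp: "g (\<phi> u0) = \<phi> u0" and gf: "\<And>y. y \<in> M \<Longrightarrow> g (f y) = y"
    and fder: "((\<lambda>u. f (\<phi> u)) has_derivative Bf) (at u0)"
    and gder: "((\<lambda>u. g (\<phi> u)) has_derivative Bg) (at u0)"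
    and k: "k > 0" and hs: "hyperbolic_splitting M f (\<phi> u0) k {0} Eu"
  obtains U a where "a > 0" "openin (top_of_set M) U" "\<phi> u0 \<in> U"
    "uniform_limit U (\<lambda>n. g ^^ (a * n)) (\<lambda>_. \<phi> u0) sequentially"
proof -
  define h where "h = f ^^ k"
  define h' where "h' = g ^^ k"
  have hM: "h ` M \<subseteq> M" and hp: "h (\<phi> u0) = \<phi> u0"
    using funpow_image_subset[OF fM] funpow_fixpoint[of f, OF fp] by (simp_all add: h_def)
  have h'M: "h' ` M \<subseteq> M" and h'p: "h' (\<phi> u0) = \<phi> u0"
    using funpow_image_subset[OF gM] funpow_fixpoint[of g, OF gp] by (simp_all add: h'_def)
  have h'h: "h' (h y) = y" if "y \<in> M" for y
    unfolding h_def h'_def using funpow_left_inverse[OF fM gf that] .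
  obtain Bh where hder: "((\<lambda>u. h (\<phi> u)) has_derivative Bh) (at u0)"
    using funpow_has_derivative_in_chart[OF fM fp fder] unfolding h_def by blast
  obtain Bh' where h'der: "((\<lambda>u. h' (\<phi> u)) has_derivative Bh') (at u0)"
    using funpow_has_derivative_in_chart[OF gM gp gder] unfolding h'_def by blast
  define A where "A = (\<lambda>w. Pr (Bh w))"
  define A' where "A' = (\<lambda>w. Pr (Bh' w))"
  have "A' \<circ> A = id"
    using local_representation_inverse[OF hM hp h'h hder h'der] by (simp add: A_def A'_def fun_eq_iff)
  moreover have "linear A" "linear A'"
    using local_representation(1)[OF hM hp hder] local_representation(1)[OF h'M h'p h'der]
    by (auto simp: A_def A'_def dest: has_derivative_linear)
  ultimately have AmA'm: "(A ^^ m) ((A' ^^ m) w) = w" for m w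
    by (intro funpow_right_inverse_linear) (auto simp: fun_eq_iff)
  obtain C \<mu> where C\<mu>: "C > 0" "0 < \<mu>" "\<mu> < 1"
    and exp: "\<And>m v. v \<in> tangent_space M (\<phi> u0) \<Longrightarrow> norm v \<le> C * \<mu> ^ m * norm ((tangent_map M h (\<phi> u0) ^^ m) v)"
    using hyperbolic_splitting_source[OF hs] unfolding h_def by blast
  have contr: "norm (D\<phi> ((A' ^^ m) w)) \<le> C * \<mu> ^ m * norm (D\<phi> w)" for m w
    using exp[OF D\<phi>_in_tangent_space, of "(A' ^^ m) w" m] tangent_map_funpow_in_chart[OF hM hp hder]
      AmA'm[of m w]
    by (simp add: A_def)
  obtain U a where "a > 0" "openin (top_of_set M) U" "\<phi> u0 \<in> U"
    "uniform_limit U (\<lambda>n. h' ^^ (a * n)) (\<lambda>_. \<phi> u0) sequentially"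
    using uniformly_attracting_iterate_of_contraction[OF h'M h'p h'der C\<mu>(2,3) less_imp_le[OF C\<mu>(1)]
        contr[unfolded A'_def]] by blast
  then show thesis
    using that[of "k * a" U] k by (simp add: h'_def funpow_mult mult.assoc)
qed

end

lemma uniformly_attracting_nbhd_at_attractor:
  fixes M :: "'a::euclidean_space set"
  assumes sm: "submanifold_without_boundary TYPE('m::euclidean_space) M"
    and C1: "C1_on_manifold TYPE('m) M f" and fp: "f p = p"
    and att: "attractor_periodic_point M f p"
  shows "\<exists>U. uniformly_attracting_nbhd M f p U"
proof -
  obtain k Es where pM: "p \<in> M" and k: "k > 0" and hs: "hyperbolic_splitting M f p k Es {0}"
    using att unfolding attractor_periodic_point_def by blast
  obtain \<phi> :: "'m \<Rightarrow> 'a" and V \<psi> D u0 where ch: "chart_at M \<phi> V \<psi> D u0" "\<phi> u0 = p" "chart_param M \<phi> V"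
    by (rule obtain_chart_at[OF sm pM])
  interpret chart_at M \<phi> V \<psi> D u0
    by (rule ch(1))
  have fM: "f ` M \<subseteq> M" and fc: "continuous_on M f"
    using C1 continuous_on_C1_on_manifold[OF sm C1] by (auto simp: C1_on_manifold_def)
  obtain Bf where "((\<lambda>u. f (\<phi> u)) has_derivative Bf) (at u0)"
    by (rule C1_on_manifold_has_derivative[OF C1 ch(3) base])
  then obtain U a where U: "a > 0" "openin (top_of_set M) U" "p \<in> U"
    "uniform_limit U (\<lambda>n. f ^^ (a * n)) (\<lambda>_. p) sequentially"
    using attracting_iterate_at_sink[OF fM _ _ k] fp hs ch(2) by metis
  then have "uniform_limit U (\<lambda>n. f ^^ n) (\<lambda>_. p) sequentially"
    using uniform_limit_funpow_of_multiple[OF fM fc fp pM openin_imp_subset[OF U(2)] U(1)] by blast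
  then show ?thesis
    using U(2,3) fM fc fp by (auto simp: uniformly_attracting_nbhd_def)
qed

lemma uniformly_attracting_nbhd_at_repeller:
  fixes M :: "'a::euclidean_space set"
  assumes sm: "submanifold_without_boundary TYPE('m::euclidean_space) M"
    and diffeo: "C1_diffeomorphism TYPE('m) M f" and fq: "f q = q"
    and rep: "repeller_periodic_point M f q"
  shows "\<exists>U. uniformly_attracting_nbhd M (inv_into M f) q U"
proof -
  define g where "g = inv_into M f"
  obtain k Eu where qM: "q \<in> M" and k: "k > 0" and hs: "hyperbolic_splitting M f q k {0} Eu"
    using rep unfolding repeller_periodic_point_def by blast
  have C1f: "C1_on_manifold TYPE('m) M f" and C1g: "C1_on_manifold TYPE('m) M g"
    and bij: "bij_betw f M M"
    using diffeo by (auto simp: C1_diffeomorphism_def g_def)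
  have fM: "f ` M \<subseteq> M" and gM: "g ` M \<subseteq> M" and gc: "continuous_on M g"
    using C1f C1g continuous_on_C1_on_manifold[OF sm C1g] by (auto simp: C1_on_manifold_def)
  have gf: "g (f y) = y" if "y \<in> M" for y
    using bij_betw_imp_inj_on[OF bij] that by (simp add: g_def inv_into_f_f)
  have gq: "g q = q"
    using gf[OF qM] fq by simp
  obtain \<phi> :: "'m \<Rightarrow> 'a" and V \<psi> D u0 where ch: "chart_at M \<phi> V \<psi> D u0" "\<phi> u0 = q" "chart_param M \<phi> V"
    by (rule obtain_chart_at[OF sm qM])
  interpret chart_at M \<phi> V \<psi> D u0
    by (rule ch(1))
  obtain Bf where "((\<lambda>u. f (\<phi> u)) has_derivative Bf) (at u0)"
    by (rule C1_on_manifold_has_derivative[OF C1f ch(3) base])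
  moreover obtain Bg where "((\<lambda>u. g (\<phi> u)) has_derivative Bg) (at u0)"
    by (rule C1_on_manifold_has_derivative[OF C1g ch(3) base])
  ultimately obtain U a where U: "a > 0" "openin (top_of_set M) U" "q \<in> U"
    "uniform_limit U (\<lambda>n. g ^^ (a * n)) (\<lambda>_. q) sequentially"
    using attracting_inverse_iterate_at_source[OF fM _ gM _ gf _ _ k] fq gq hs ch(2) by metis
  then have "uniform_limit U (\<lambda>n. g ^^ n) (\<lambda>_. q) sequentially"
    using uniform_limit_funpow_of_multiple[OF gM gc gq qM openin_imp_subset[OF U(2)] U(1)] by blast
  then show ?thesis
    using U(2,3) gM gc gq by (auto simp: uniformly_attracting_nbhd_def g_def)
qed

section \<open>Arcs and points in dimension at least two\<close>

lemma arc_continuous_image: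
  assumes "arc c" "continuous_on (path_image c) h" "inj_on h (path_image c)"
  shows "arc (h \<circ> c)"
  using assms path_continuous_image comp_inj_on arc_imp_inj_on
  unfolding arc_def path_image_def by blast

definition arc_or_point :: "'a::topological_space set \<Rightarrow> bool" where
  "arc_or_point C \<longleftrightarrow> (\<exists>z. C = {z}) \<or> (\<exists>c. arc c \<and> C = path_image c)"

lemma compact_arc_or_point: "arc_or_point C \<Longrightarrow> compact C"
  by (auto simp: arc_or_point_def compact_arc_image)

lemma not_image_subset_arc_or_point:
  fixes \<phi> :: "'m::euclidean_space \<Rightarrow> 'a::euclidean_space"
  assumes "DIM('m) \<ge> 2" "open S" "S \<noteq> {}" "continuous_on S \<phi>" "inj_on \<phi> S" "arc_or_point C"
  shows "\<not> \<phi> ` S \<subseteq> C"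
proof
  assume sub: "\<phi> ` S \<subseteq> C"
  consider z where "C = {z}" | c where "arc c" "C = path_image c"
    using assms(6) unfolding arc_or_point_def by blast
  then show False
  proof cases
    case (1 z)
    then have "S = {u}" if "u \<in> S" for u
      using sub assms(5) that by (auto dest: inj_onD)
    then show False
      using assms(2,3) not_open_singleton by blast
  next
    case (2 c)
    define c' where "c' = the_inv_into {0..1} c"
    text \<open>An arc is homeomorphic to an interval, so \<open>c' \<circ> \<phi>\<close> embeds \<open>S\<close> into the line.\<close>
    have "continuous_on (path_image c) c'"
      unfolding c'_def path_image_def
      using 2(1) continuous_on_inv_into[of "{0..1}" c] by (auto simp: arc_def path_def)
    then have "continuous_on S (c' \<circ> \<phi>)"
      using continuous_on_compose assms(4) sub 2(2) continuous_on_subset by blast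
    moreover have "inj_on (c' \<circ> \<phi>) S"
      using assms(5) 2 sub unfolding c'_def path_image_def
      by (intro comp_inj_on inj_on_subset[OF inj_on_the_inv_into]) (auto simp: arc_imp_inj_on)
    ultimately have "DIM('m) \<le> DIM(real)"
      using invariance_of_dimension assms(2,3) by blast
    then show False
      using assms(1) by simp
  qed
qed

lemma dense_complement_of_preimage:
  fixes \<phi> :: "'m::euclidean_space \<Rightarrow> 'a::euclidean_space"
  assumes "DIM('m) \<ge> 2" "r > 0" "continuous_on (cball u r) \<phi>" "inj_on \<phi> (cball u r)" "arc_or_point C"
  shows "cball u r \<subseteq> closure (cball u r - \<phi> -` C)"
proof
  fix v assume "v \<in> cball u r"
  show "v \<in> closure (cball u r - \<phi> -` C)"
  proof (rule ccontr)
    assume "v \<notin> closure (cball u r - \<phi> -` C)"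
    then obtain e where "e > 0" and far: "\<And>w. w \<in> cball u r - \<phi> -` C \<Longrightarrow> \<not> dist w v < e"
      unfolding closure_approachable by blast
    define B where "B = ball v e \<inter> ball u r"
    have "v \<in> closure (ball u r)"
      using \<open>v \<in> cball u r\<close> assms(2) by (simp add: closure_ball)
    then have "B \<noteq> {}"
      using \<open>e > 0\<close> unfolding closure_approachable B_def by (force simp: dist_commute)
    moreover have "B \<subseteq> cball u r"
      by (auto simp: B_def)
    moreover have "\<phi> w \<in> C" if "w \<in> B" for w
    proof (rule ccontr)
      assume "\<phi> w \<notin> C"
      then have "w \<in> cball u r - \<phi> -` C"
        using that \<open>B \<subseteq> cball u r\<close> by auto
      moreover have "dist w v < e"
        using that by (simp add: B_def dist_commute)
      ultimately show False
        using far by blast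
    qed
    then have "\<phi> ` B \<subseteq> C"
      by blast
    ultimately show False
      using not_image_subset_arc_or_point[OF assms(1) _ _ _ _ assms(5), of B]
        continuous_on_subset[OF assms(3)] inj_on_subset[OF assms(4)] by (auto simp: B_def open_Int)
  qed
qed

lemma exists_point_outside_countable_arcs:
  fixes \<phi> :: "'m::euclidean_space \<Rightarrow> 'a::euclidean_space"
  assumes "DIM('m) \<ge> 2" "r > 0" "continuous_on (cball u r) \<phi>" "inj_on \<phi> (cball u r)"
    and "countable \<C>" "\<And>C. C \<in> \<C> \<Longrightarrow> arc_or_point C"
  obtains v where "v \<in> cball u r" "\<phi> v \<notin> \<Union>\<C>"
proof -
  define S where "S = cball u r"
  define G where "G = (\<lambda>C. S - \<phi> -` C) ` \<C>"
  have "openin (top_of_set S) T \<and> S \<subseteq> closure T" if "T \<in> G" for T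
  proof -
    obtain C where C: "C \<in> \<C>" "T = S - \<phi> -` C"
      using \<open>T \<in> G\<close> by (auto simp: G_def)
    have "closedin (top_of_set S) (S \<inter> \<phi> -` C)"
      using assms(3) compact_arc_or_point[OF assms(6)[OF C(1)]]
      by (simp add: S_def continuous_closedin_preimage compact_imp_closed)
    then have "openin (top_of_set S) (S - (S \<inter> \<phi> -` C))"
      by (intro openin_diff openin_subtopology_self)
    moreover have "S - (S \<inter> \<phi> -` C) = T"
      using C(2) by blast
    ultimately show ?thesis
      using dense_complement_of_preimage[OF assms(1-4) assms(6)[OF C(1)]] C(2) by (simp add: S_def)
  qed
  then have "S \<subseteq> closure (\<Inter>G)"
    using assms(5) by (intro Baire) (auto simp: S_def G_def)
  moreover have "u \<in> S"
    using assms(2) by (simp add: S_def)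
  ultimately obtain v where v: "v \<in> \<Inter>G"
    by (metis closure_empty empty_iff subsetD equals0I)
  show thesis
  proof (cases "\<C> = {}")
    case True
    then show thesis
      using that[of u] \<open>u \<in> S\<close> by (simp add: S_def)
  next
    case False
    then have "v \<in> S" "\<forall>C\<in>\<C>. \<phi> v \<notin> C"
      using v by (auto simp: G_def)
    then show thesis
      using that by (auto simp: S_def)
  qed
qed

lemma exists_arc_leaving_countable_arcs:
  fixes M :: "'a::euclidean_space set"
  assumes "DIM('m::euclidean_space) \<ge> 2" "submanifold_without_boundary TYPE('m) M"
    and "openin (top_of_set M) W" "x \<in> W" "x \<in> \<Union>\<C>" "countable \<C>"
    and "\<And>C. C \<in> \<C> \<Longrightarrow> arc_or_point C"
  obtains \<alpha> where "arc \<alpha>" "pathstart \<alpha> = x" "path_image \<alpha> \<subseteq> W" "pathfinish \<alpha> \<notin> \<Union>\<C>"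
proof -
  have "x \<in> M"
    using assms(3,4) openin_imp_subset by blast
  then obtain \<phi> :: "'m \<Rightarrow> 'a" and V where "chart_param M \<phi> V" "x \<in> \<phi> ` V"
    using assms(2) unfolding submanifold_without_boundary_def by blast
  then obtain \<psi> u where V: "open V" "homeomorphism V (\<phi> ` V) \<phi> \<psi>" "\<phi> ` V \<subseteq> M"
    and u: "u \<in> V" "\<phi> u = x"
    unfolding chart_param_def by blast
  have cont: "continuous_on V \<phi>"
    using V(2) by (simp add: homeomorphism_def)
  have inj: "inj_on \<phi> V"
    using V(2) by (metis homeomorphism_apply1 inj_on_inverseI)
  have "openin (top_of_set V) (V \<inter> \<phi> -` W)"
    using continuous_openin_preimage[OF cont _ assms(3)] V(3) by blast
  then have "open (V \<inter> \<phi> -` W)"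
    using V(1) openin_open_trans by blast
  then obtain r where r: "r > 0" "cball u r \<subseteq> V \<inter> \<phi> -` W"
    using u assms(4) open_contains_cball[of "V \<inter> \<phi> -` W"] by blast
  then obtain v where v: "v \<in> cball u r" "\<phi> v \<notin> \<Union>\<C>"
    using exists_point_outside_countable_arcs[OF assms(1) r(1) _ _ assms(6,7), of u \<phi>]
      continuous_on_subset[OF cont] inj_on_subset[OF inj] by blast
  have "v \<noteq> u"
    using u(2) v(2) assms(5) by blast
  have seg: "path_image (linepath u v) \<subseteq> cball u r"
    using v(1) r(1) by (simp add: closed_segment_subset)
  show thesis
  proof
    show "arc (\<phi> \<circ> linepath u v)"
      using seg r(2) \<open>v \<noteq> u\<close>
      by (intro arc_continuous_image arc_linepath continuous_on_subset[OF cont] inj_on_subset[OF inj])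
        auto
    show "pathstart (\<phi> \<circ> linepath u v) = x" "pathfinish (\<phi> \<circ> linepath u v) \<notin> \<Union>\<C>"
      using u(2) v(2) by (simp_all add: pathstart_compose pathfinish_compose)
    show "path_image (\<phi> \<circ> linepath u v) \<subseteq> W"
      using seg r(2) by (auto simp: path_image_compose)
  qed
qed

section \<open>Continua joining an attractor to a repeller\<close>

lemma hausdist_Un_le:
  fixes K B :: "'a::metric_space set"
  assumes "K \<noteq> {}" "e \<ge> 0" "\<And>b. b \<in> B \<Longrightarrow> \<exists>z\<in>K. dist b z \<le> e"
  shows "0 \<le> hausdist (K \<union> B) K" "hausdist (K \<union> B) K \<le> e"
proof -
  have "infdist a K \<le> e" if "a \<in> K \<union> B" for a
    using that assms(2,3) infdist_le[of _ K a] by (force simp: infdist_zero)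
  then have "(SUP a\<in>K \<union> B. infdist a K) \<le> e"
    using assms(1) by (intro cSUP_least) auto
  moreover have "(SUP b\<in>K. infdist b (K \<union> B)) = 0"
    using assms(1) by (simp add: infdist_zero)
  ultimately show "0 \<le> hausdist (K \<union> B) K" "hausdist (K \<union> B) K \<le> e"
    using assms(2) by (simp_all add: hausdist_def)
qed

lemma hausdist_Un_near_point:
  fixes K B :: "'a::metric_space set"
  assumes "c \<in> K" "e \<ge> 0" "\<And>b. b \<in> B \<Longrightarrow> dist b c \<le> e"
  shows "hausdist (K \<union> B) K \<le> e"
  using hausdist_Un_le(2)[of K e B] assms by blast

lemma hausdist_Un_tendsto_0:
  fixes K :: "'a::metric_space set"
  assumes "c \<in> K" "\<forall>e>0. \<exists>N. \<forall>n\<ge>N. \<forall>b\<in>B n. dist b c < e"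
  shows "(\<lambda>n. hausdist (K \<union> B n) K) \<longlonglongrightarrow> 0"
proof (rule LIMSEQ_I)
  fix r :: real assume "r > 0"
  then obtain N where N: "\<And>n b. n \<ge> N \<Longrightarrow> b \<in> B n \<Longrightarrow> dist b c \<le> r / 2"
    using assms(2) half_gt_zero by (meson less_imp_le)
  have "norm (hausdist (K \<union> B n) K - 0) < r" if "n \<ge> N" for n
  proof -
    have "\<exists>z\<in>K. dist b z \<le> r / 2" if "b \<in> B n" for b
      using N[OF \<open>n \<ge> N\<close> that] assms(1) by blast
    moreover have "K \<noteq> {}"
      using assms(1) by blast
    ultimately have "0 \<le> hausdist (K \<union> B n) K" "hausdist (K \<union> B n) K \<le> r / 2"
      using hausdist_Un_le[of K "r / 2" "B n"] \<open>r > 0\<close> by auto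
    then show ?thesis
      using \<open>r > 0\<close> by simp
  qed
  then show "\<exists>N. \<forall>n\<ge>N. norm (hausdist (K \<union> B n) K - 0) < r"
    by blast
qed

lemma connected_UN_consecutive:
  assumes "\<And>n. connected (S n)" "\<And>n. S n \<inter> S (Suc n) \<noteq> {}"
  shows "connected (\<Union>n. S n)"
proof -
  have "connected (\<Union>j\<le>n. S j)" for n
  proof (induction n)
    case (Suc n)
    have "(\<Union>j\<le>Suc n. S j) = (\<Union>j\<le>n. S j) \<union> S (Suc n)"
      by (auto simp: atMost_Suc)
    moreover have "(\<Union>j\<le>n. S j) \<inter> S (Suc n) \<noteq> {}"
      using assms(2)[of n] by blast
    ultimately show ?case
      using connected_Un[OF Suc assms(1)] by simp
  qed (simp add: assms(1))
  moreover obtain z where "z \<in> S 0"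
    using assms(2)[of 0] by blast
  then have "z \<in> (\<Inter>n. \<Union>j\<le>n. S j)"
    by blast
  ultimately have "connected (\<Union>n. \<Union>j\<le>n. S j)"
    by (intro connected_Union) blast+
  moreover have "(\<Union>n. S n) = (\<Union>n. \<Union>j\<le>n. S j)"
    by blast
  ultimately show ?thesis
    by simp
qed

lemma continua_Un:
  assumes "P \<in> continua M" "A \<subseteq> M" "compact A" "connected A" "A \<inter> P \<noteq> {}"
  shows "P \<union> A \<in> continua M"
  using assms by (auto simp: continua_def intro: compact_Un connected_Un)

lemma arc_initial_segments_inj:
  assumes "arc \<alpha>" "closed P" "pathstart \<alpha> \<in> P" "pathfinish \<alpha> \<notin> P"
  obtains s0 where "0 \<le> s0" "s0 < 1" "\<And>s. s0 < s \<Longrightarrow> s \<le> 1 \<Longrightarrow> \<alpha> s \<notin> P"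
    "inj_on (\<lambda>s. P \<union> \<alpha> ` {0..s}) {s0<..1}"
proof -
  define T where "T = {0..1} \<inter> \<alpha> -` P"
  have "closed T"
    using assms(1,2) continuous_closed_preimage[of "{0..1}" \<alpha> P]
    by (simp add: T_def arc_def path_def)
  moreover have "0 \<in> T" "bdd_above T"
    using assms(3) by (auto simp: T_def pathstart_def bdd_above_def)
  ultimately have "Sup T \<in> T"
    using closed_contains_Sup by blast
  then have s0: "0 \<le> Sup T" "Sup T < 1"
    using assms(4) by (auto simp: T_def pathfinish_def less_eq_real_def)
  have out: "\<alpha> s \<notin> P" if "Sup T < s" "s \<le> 1" for s
    using that s0(1) cSup_upper[OF _ \<open>bdd_above T\<close>, of s] by (force simp: T_def)
  have "inj_on (\<lambda>s. P \<union> \<alpha> ` {0..s}) {Sup T<..1}"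
  proof (rule linorder_inj_onI')
    fix s t assume st: "s \<in> {Sup T<..1}" "t \<in> {Sup T<..1}" "s < t"
    have "\<alpha> t \<notin> \<alpha> ` {0..s}"
    proof
      assume "\<alpha> t \<in> \<alpha> ` {0..s}"
      then obtain r where "r \<in> {0..s}" "\<alpha> t = \<alpha> r"
        by blast
      then have "t = r"
        using inj_onD[OF arc_imp_inj_on[OF assms(1)]] st s0(1) by auto
      then show False
        using \<open>r \<in> {0..s}\<close> st(3) by auto
    qed
    then have "\<alpha> t \<notin> P \<union> \<alpha> ` {0..s}"
      using out[of t] st by auto
    moreover have "\<alpha> t \<in> P \<union> \<alpha> ` {0..t}"
      using st s0(1) by auto
    ultimately show "P \<union> \<alpha> ` {0..s} \<noteq> P \<union> \<alpha> ` {0..t}"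
      by blast
  qed
  then show thesis
    using that s0 out by blast
qed

locale attractor_repeller_pair =
  fixes M :: "'a::euclidean_space set" and f :: "'a \<Rightarrow> 'a" and p q :: 'a
  assumes compact: "compact M"
    and homeo: "homeomorphism M M f (inv_into M f)"
    and sink: "\<exists>U. uniformly_attracting_nbhd M f p U"
    and source: "\<exists>U. uniformly_attracting_nbhd M (inv_into M f) q U"
begin

abbreviation finv :: "'a \<Rightarrow> 'a" where "finv \<equiv> inv_into M f"

lemma homeomorphism_funpow_M: "homeomorphism M M (f ^^ n) (finv ^^ n)"
  by (rule homeomorphism_funpow[OF homeo])

lemma funpow_in_M: "y \<in> M \<Longrightarrow> (f ^^ n) y \<in> M" "y \<in> M \<Longrightarrow> (finv ^^ n) y \<in> M"
  using homeomorphism_funpow_M[of n] by (auto simp: homeomorphism_def)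

lemma continuous_on_funpow_M: "continuous_on M (f ^^ n)" "continuous_on M (finv ^^ n)"
  using homeomorphism_funpow_M[of n] by (auto simp: homeomorphism_def)

lemma inj_on_funpow_M: "inj_on (f ^^ n) M" "inj_on (finv ^^ n) M"
  using homeomorphism_apply1[OF homeomorphism_funpow_M[of n]]
    homeomorphism_apply2[OF homeomorphism_funpow_M[of n]]
  by (auto intro: inj_on_inverseI)

lemma f_finv [simp]: "y \<in> M \<Longrightarrow> f (finv y) = y" and finv_f [simp]: "y \<in> M \<Longrightarrow> finv (f y) = y"
  using homeo by (auto simp: homeomorphism_def)

lemma fixed_points: "p \<in> M" "f p = p" "q \<in> M" "finv q = q"
  using sink source by (auto simp: uniformly_attracting_nbhd_def dest: openin_imp_subset)

lemma uniform_limit_stable: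
  assumes "compact K" "K \<subseteq> stable_set M f p"
  shows "\<forall>e>0. \<exists>N. \<forall>n\<ge>N. \<forall>y\<in>K. dist ((f ^^ n) y) p < e"
  using sink uniformly_attracting_nbhd.uniform_limit_on_compact_stable[OF _ assms]
  unfolding uniform_limit_sequentially_iff by blast

lemma uniform_limit_unstable:
  assumes "compact K" "K \<subseteq> unstable_set M f q"
  shows "\<forall>e>0. \<exists>N. \<forall>n\<ge>N. \<forall>y\<in>K. dist ((finv ^^ n) y) q < e"
  using source uniformly_attracting_nbhd.uniform_limit_on_compact_stable[OF _ assms(1)] assms(2)
  unfolding uniform_limit_sequentially_iff unstable_set_def by blast

lemma openin_stable_Int_unstable:
  "openin (top_of_set M) (stable_set M f p \<inter> unstable_set M f q)"
  using sink source uniformly_attracting_nbhd.openin_stable_set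
  unfolding unstable_set_def by blast

lemma stable_Int_unstable_subset: "stable_set M f p \<inter> unstable_set M f q \<subseteq> M"
  by (auto simp: stable_set_def)

lemma funpow_image_invariant:
  assumes "P \<subseteq> M" "f ` P = P"
  shows "(f ^^ n) ` P = P" "(finv ^^ n) ` P = P"
proof -
  have "finv ` P = (\<lambda>y. finv (f y)) ` P"
    using assms(2) by (metis image_image)
  also have "\<dots> = (\<lambda>y. y) ` P"
    using assms(1) by (intro image_cong) auto
  also have "\<dots> = P"
    by simp
  finally show "(finv ^^ n) ` P = P"
    by (rule funpow_image_eq)
  show "(f ^^ n) ` P = P"
    using assms(2) by (rule funpow_image_eq)
qed

lemma homoclinic_Un:
  assumes P: "P \<in> continua M" "f ` P = P" "p \<in> P" "q \<in> P"
    and A: "compact A" "A \<subseteq> stable_set M f p \<inter> unstable_set M f q" "P \<union> A \<noteq> P"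
    and K: "P \<union> A \<in> continua M"
  shows "continuum_homoclinic M f (P \<union> A)"
proof -
  have PM: "P \<subseteq> M"
    using P(1) by (simp add: continua_def)
  have fnP: "(f ^^ n) ` P = P" "(finv ^^ n) ` P = P" for n
    using funpow_image_invariant[OF PM P(2)] by blast+
  have "(\<lambda>n. hausdist (P \<union> (f ^^ n) ` A) P) \<longlonglongrightarrow> 0"
    using uniform_limit_stable[OF A(1)] A(2) P(3) by (intro hausdist_Un_tendsto_0) auto
  moreover have "(\<lambda>n. hausdist (P \<union> (finv ^^ n) ` A) P) \<longlonglongrightarrow> 0"
    using uniform_limit_unstable[OF A(1)] A(2) P(4) by (intro hausdist_Un_tendsto_0) auto
  ultimately show ?thesis
    unfolding continuum_homoclinic_def using P(1,2) A(3) K fnP by (auto simp: image_Un)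
qed

lemma nonwandering_Un:
  assumes P: "P \<in> continua M" "f ` P = P" "p \<in> P" "q \<in> P"
    and A: "compact A" "connected A" "A \<subseteq> stable_set M f p \<inter> unstable_set M f q" "A \<inter> P \<noteq> {}"
  shows "P \<union> A \<in> continuum_nonwandering M f"
proof -
  define K where "K = P \<union> A"
  have PM: "P \<subseteq> M" and AM: "A \<subseteq> M"
    using P(1) A(3) stable_Int_unstable_subset by (auto simp: continua_def)
  have K: "K \<in> continua M" "K \<noteq> {}"
    unfolding K_def using continua_Un[OF P(1) AM A(1,2,4)] by (auto simp: continua_def)
  have fnP: "(f ^^ n) ` P = P" "(finv ^^ n) ` P = P" for n
    using funpow_image_invariant[OF PM P(2)] by blast+
  have "\<exists>n\<ge>1. \<exists>A'\<in>continua M. hausdist A' K < \<epsilon> \<and> hausdist ((f ^^ n) ` A') K < \<epsilon>"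
    if "\<epsilon> > 0" for \<epsilon>
  proof -
    obtain N1 where N1: "\<forall>n\<ge>N1. \<forall>y\<in>A. dist ((f ^^ n) y) p < \<epsilon> / 2"
      using uniform_limit_stable[OF A(1)] A(3) \<open>\<epsilon> > 0\<close> by (meson half_gt_zero le_infE)
    obtain N2 where N2: "\<forall>n\<ge>N2. \<forall>y\<in>A. dist ((finv ^^ n) y) q < \<epsilon> / 2"
      using uniform_limit_unstable[OF A(1)] A(3) \<open>\<epsilon> > 0\<close> by (meson half_gt_zero le_infE)
    define n where "n = Suc (N1 + N2)"
    have "n \<ge> N1" "n \<ge> N2"
      by (simp_all add: n_def)
    define B where "B = (finv ^^ n) ` A"
    text \<open>Adding to \<open>K\<close> the far past \<open>B\<close> of \<open>A\<close>, which lies near \<open>q\<close>, changes \<open>K\<close> little; the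
      \<open>n\<close>-th image of the result is \<open>K\<close> plus the far future of \<open>A\<close>, which lies near \<open>p\<close>.\<close>
    define A' where "A' = K \<union> B"
    have "B \<subseteq> M" "compact B" "connected B"
      using AM A(1,2) funpow_in_M(2) continuous_on_subset[OF continuous_on_funpow_M(2)]
      by (auto simp: B_def intro: compact_continuous_image connected_continuous_image)
    moreover have "B \<inter> K \<noteq> {}"
      using A(4) fnP(2)[of n] by (auto simp: B_def K_def)
    ultimately have A': "A' \<in> continua M"
      unfolding A'_def using continua_Un[OF K(1)] by blast
    have "(f ^^ n) ` B = A"
      using AM homeomorphism_apply2[OF homeomorphism_funpow_M[of n]]
      by (force simp: B_def image_comp image_iff)
    then have fnA': "(f ^^ n) ` A' = K \<union> (f ^^ n) ` A"
      using fnP(1)[of n] by (auto simp: A'_def K_def B_def image_Un)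
    have "hausdist A' K \<le> \<epsilon> / 2"
      unfolding A'_def using \<open>q \<in> P\<close> N2 \<open>n \<ge> N2\<close> \<open>\<epsilon> > 0\<close>
      by (intro hausdist_Un_near_point[of q]) (auto simp: K_def B_def intro: less_imp_le)
    moreover have "hausdist ((f ^^ n) ` A') K \<le> \<epsilon> / 2"
      unfolding fnA' using \<open>p \<in> P\<close> N1 \<open>n \<ge> N1\<close> \<open>\<epsilon> > 0\<close>
      by (intro hausdist_Un_near_point[of p]) (auto simp: K_def intro: less_imp_le)
    moreover have "n \<ge> 1"
      by (simp add: n_def)
    ultimately show ?thesis
      using A' \<open>\<epsilon> > 0\<close> by (intro exI[of _ n] conjI bexI[of _ A']) auto
  qed
  then show ?thesis
    using K(1) unfolding continuum_nonwandering_def K_def by blast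
qed

definition orbit_of :: "'a set \<Rightarrow> 'a set" where
  "orbit_of \<gamma> = (\<Union>n. (f ^^ n) ` \<gamma>) \<union> (\<Union>n. (finv ^^ n) ` \<gamma>)"

definition orbit_pieces :: "'a set \<Rightarrow> 'a set set" where
  "orbit_pieces \<gamma> = {{p}, {q}} \<union> range (\<lambda>n. (f ^^ n) ` \<gamma>) \<union> range (\<lambda>n. (finv ^^ n) ` \<gamma>)"

lemma countable_orbit_pieces: "countable (orbit_pieces \<gamma>)"
  by (simp add: orbit_pieces_def)

lemma orbit_of_subset_orbit_pieces: "orbit_of \<gamma> \<union> {p, q} \<subseteq> \<Union>(orbit_pieces \<gamma>)"
proof -
  have "(f ^^ n) ` \<gamma> \<in> orbit_pieces \<gamma>" "(finv ^^ n) ` \<gamma> \<in> orbit_pieces \<gamma>"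
    "{p} \<in> orbit_pieces \<gamma>" "{q} \<in> orbit_pieces \<gamma>" for n
    by (simp_all add: orbit_pieces_def)
  then show ?thesis
    unfolding orbit_of_def by blast
qed

lemma arc_or_point_orbit_pieces:
  assumes "arc g" "path_image g \<subseteq> M" "C \<in> orbit_pieces (path_image g)"
  shows "arc_or_point C"
proof -
  have "arc ((f ^^ n) \<circ> g)" "arc ((finv ^^ n) \<circ> g)" for n
    using arc_continuous_image[OF assms(1) continuous_on_subset[OF continuous_on_funpow_M(1) assms(2)]
        inj_on_subset[OF inj_on_funpow_M(1) assms(2)]]
      arc_continuous_image[OF assms(1) continuous_on_subset[OF continuous_on_funpow_M(2) assms(2)]
        inj_on_subset[OF inj_on_funpow_M(2) assms(2)]]
    by blast+
  moreover consider "C = {p}" | "C = {q}"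
    | n where "C = (f ^^ n) ` path_image g" | n where "C = (finv ^^ n) ` path_image g"
    using assms(3) unfolding orbit_pieces_def by blast
  ultimately show ?thesis
    unfolding arc_or_point_def by (cases; metis path_image_compose)
qed

context
  fixes \<gamma> :: "'a set" and x :: 'a
  assumes \<gamma>: "compact \<gamma>" "connected \<gamma>" "\<gamma> \<subseteq> stable_set M f p \<inter> unstable_set M f q"
    and x: "x \<in> \<gamma>" "f x \<in> \<gamma>"
begin

lemma gamma_subset_M: "\<gamma> \<subseteq> M"
  using \<gamma>(3) stable_Int_unstable_subset by blast

lemma orbit_of_subset_M: "orbit_of \<gamma> \<subseteq> M"
  using gamma_subset_M funpow_in_M by (auto simp: orbit_of_def)

lemma connected_orbit_of: "connected (orbit_of \<gamma>)"
proof -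
  have conn: "connected ((f ^^ n) ` \<gamma>)" "connected ((finv ^^ n) ` \<gamma>)" for n
    using connected_continuous_image[OF continuous_on_subset[OF continuous_on_funpow_M(1) gamma_subset_M] \<gamma>(2)]
      connected_continuous_image[OF continuous_on_subset[OF continuous_on_funpow_M(2) gamma_subset_M] \<gamma>(2)]
    by blast+
  have "(f ^^ Suc n) x \<in> (f ^^ n) ` \<gamma> \<inter> (f ^^ Suc n) ` \<gamma>" for n
    using x by (auto simp: funpow_swap1)
  then have "connected (\<Union>n. (f ^^ n) ` \<gamma>)"
    using conn(1) by (intro connected_UN_consecutive) blast+
  moreover have "(finv ^^ n) x \<in> (finv ^^ n) ` \<gamma> \<inter> (finv ^^ Suc n) ` \<gamma>" for n
  proof -
    have "(finv ^^ Suc n) (f x) = (finv ^^ n) x"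
      using x gamma_subset_M by (simp add: funpow_swap1 subsetD)
    then show ?thesis
      using x by (metis IntI image_eqI)
  qed
  then have "connected (\<Union>n. (finv ^^ n) ` \<gamma>)"
    using conn(2) by (intro connected_UN_consecutive) blast+
  moreover have "x \<in> (\<Union>n. (f ^^ n) ` \<gamma>) \<inter> (\<Union>n. (finv ^^ n) ` \<gamma>)"
    using x by (auto intro!: exI[of _ 0])
  ultimately show ?thesis
    unfolding orbit_of_def by (intro connected_Un) blast+
qed

lemma image_orbit_of: "f ` orbit_of \<gamma> = orbit_of \<gamma>"
proof -
  have step_back: "f ((finv ^^ Suc n) a) = (finv ^^ n) a" if "a \<in> \<gamma>" for n a
    using that gamma_subset_M funpow_in_M(2) by auto
  have fwd: "(f ^^ n) a \<in> orbit_of \<gamma>" "(finv ^^ n) a \<in> orbit_of \<gamma>" if "a \<in> \<gamma>" for n a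
    using that unfolding orbit_of_def by blast+
  show ?thesis
  proof (intro equalityI subsetI)
    fix y assume "y \<in> f ` orbit_of \<gamma>"
    then obtain z where z: "z \<in> orbit_of \<gamma>" "y = f z"
      by blast
    then consider n a where "a \<in> \<gamma>" "z = (f ^^ n) a" | n a where "a \<in> \<gamma>" "z = (finv ^^ n) a"
      unfolding orbit_of_def by blast
    then show "y \<in> orbit_of \<gamma>"
    proof cases
      case (1 n a)
      then show ?thesis
        using fwd(1)[of a "Suc n"] z(2) by simp
    next
      case (2 n a)
      then show ?thesis
        using fwd(1)[of a 1] fwd(2)[of a] step_back[of a] z(2) by (cases n) auto
    qed
  next
    fix y assume "y \<in> orbit_of \<gamma>"
    then consider n a where "a \<in> \<gamma>" "y = (f ^^ n) a" | n a where "a \<in> \<gamma>" "y = (finv ^^ n) a"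
      unfolding orbit_of_def by blast
    then show "y \<in> f ` orbit_of \<gamma>"
    proof cases
      case (1 n a)
      then show ?thesis
        using fwd(1)[of a] fwd(2)[of a 1] step_back[of a 0] by (cases n) (auto intro!: image_eqI)
    next
      case (2 n a)
      then show ?thesis
        using fwd(2)[of a "Suc n"] step_back[of a n] by (auto intro!: image_eqI)
    qed
  qed
qed

lemma fixed_points_in_closure_orbit_of: "p \<in> closure (orbit_of \<gamma>)" "q \<in> closure (orbit_of \<gamma>)"
proof -
  have "(\<lambda>n. (f ^^ n) x) \<longlonglongrightarrow> p" "(\<lambda>n. (finv ^^ n) x) \<longlonglongrightarrow> q"
    using x(1) \<gamma>(3) stable_set_fixpoint_iff[of f p] stable_set_fixpoint_iff[of finv q] fixed_points
    unfolding unstable_set_def by blast+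
  moreover have "(f ^^ n) x \<in> orbit_of \<gamma>" "(finv ^^ n) x \<in> orbit_of \<gamma>" for n
    using x(1) unfolding orbit_of_def by blast+
  ultimately show "p \<in> closure (orbit_of \<gamma>)" "q \<in> closure (orbit_of \<gamma>)"
    unfolding closure_sequential by (blast intro: exI[of _ "\<lambda>n. (f ^^ n) x"] exI[of _ "\<lambda>n. (finv ^^ n) x"])+
qed

lemma orbit_of_near_fixed_points:
  assumes "e > 0"
  obtains F where "compact F" "F \<subseteq> orbit_of \<gamma>" "orbit_of \<gamma> \<subseteq> F \<union> cball p e \<union> cball q e"
proof -
  obtain N1 where N1: "\<forall>n\<ge>N1. \<forall>y\<in>\<gamma>. dist ((f ^^ n) y) p < e"
    using uniform_limit_stable[OF \<gamma>(1)] \<gamma>(3) assms by blast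
  obtain N2 where N2: "\<forall>n\<ge>N2. \<forall>y\<in>\<gamma>. dist ((finv ^^ n) y) q < e"
    using uniform_limit_unstable[OF \<gamma>(1)] \<gamma>(3) assms by blast
  define F where "F = (\<Union>n<N1. (f ^^ n) ` \<gamma>) \<union> (\<Union>n<N2. (finv ^^ n) ` \<gamma>)"
  have "compact ((f ^^ n) ` \<gamma>)" "compact ((finv ^^ n) ` \<gamma>)" for n
    using compact_continuous_image[OF continuous_on_subset[OF continuous_on_funpow_M(1) gamma_subset_M] \<gamma>(1)]
      compact_continuous_image[OF continuous_on_subset[OF continuous_on_funpow_M(2) gamma_subset_M] \<gamma>(1)]
    by blast+
  then have "compact F"
    unfolding F_def by (intro compact_Un compact_UN) auto
  moreover have "F \<subseteq> orbit_of \<gamma>"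
    unfolding F_def orbit_of_def by blast
  moreover have "orbit_of \<gamma> \<subseteq> F \<union> cball p e \<union> cball q e"
  proof
    fix y assume "y \<in> orbit_of \<gamma>"
    then consider n a where "a \<in> \<gamma>" "y = (f ^^ n) a" | n a where "a \<in> \<gamma>" "y = (finv ^^ n) a"
      unfolding orbit_of_def by blast
    then show "y \<in> F \<union> cball p e \<union> cball q e"
    proof cases
      case (1 n a)
      then show ?thesis
        using N1 by (cases "n < N1") (auto simp: F_def dist_commute less_imp_le not_less)
    next
      case (2 n a)
      then show ?thesis
        using N2 by (cases "n < N2") (auto simp: F_def dist_commute less_imp_le not_less)
    qed
  qed
  ultimately show thesis
    using that by blast
qed

lemma closure_orbit_of_subset: "closure (orbit_of \<gamma>) \<subseteq> orbit_of \<gamma> \<union> {p, q}"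
proof
  fix z assume z: "z \<in> closure (orbit_of \<gamma>)"
  show "z \<in> orbit_of \<gamma> \<union> {p, q}"
  proof (rule ccontr)
    assume nz: "z \<notin> orbit_of \<gamma> \<union> {p, q}"
    define e where "e = min (dist z p) (dist z q) / 2"
    have "dist z p > 0" "dist z q > 0"
      using nz by auto
    then have "e > 0"
      by (simp add: e_def)
    then obtain F where F: "compact F" "F \<subseteq> orbit_of \<gamma>" "orbit_of \<gamma> \<subseteq> F \<union> cball p e \<union> cball q e"
      by (rule orbit_of_near_fixed_points)
    then have "closed (F \<union> cball p e \<union> cball q e)"
      by (intro closed_Un compact_imp_closed) auto
    then have "z \<in> F \<union> cball p e \<union> cball q e"
      using z F(3) closure_minimal by blast
    moreover have "e < dist p z" "e < dist q z"
      using \<open>dist z p > 0\<close> \<open>dist z q > 0\<close> dist_commute[of z p] dist_commute[of z q]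
      unfolding e_def by linarith+
    ultimately show False
      using nz F(2) by auto
  qed
qed

lemma closure_orbit_of_continuum:
  "closure (orbit_of \<gamma>) \<in> continua M" "f ` closure (orbit_of \<gamma>) = closure (orbit_of \<gamma>)"
proof -
  have sub: "closure (orbit_of \<gamma>) \<subseteq> M"
    using closure_minimal[OF orbit_of_subset_M compact_imp_closed[OF compact]] .
  have comp: "compact (closure (orbit_of \<gamma>))"
    using closed_closure compact sub compact_Int_closed inf.absorb_iff2 by metis
  show "closure (orbit_of \<gamma>) \<in> continua M"
    using sub comp connected_imp_connected_closure[OF connected_orbit_of]
      fixed_points_in_closure_orbit_of by (auto simp: continua_def)
  have fc: "continuous_on (closure (orbit_of \<gamma>)) f"
    using continuous_on_funpow_M(1)[of 1] sub continuous_on_subset by auto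
  show "f ` closure (orbit_of \<gamma>) = closure (orbit_of \<gamma>)"
  proof
    show "f ` closure (orbit_of \<gamma>) \<subseteq> closure (orbit_of \<gamma>)"
      using image_closure_subset[OF fc closed_closure] image_orbit_of closure_subset by blast
    have "closed (f ` closure (orbit_of \<gamma>))"
      using compact_imp_closed compact_continuous_image[OF fc comp] by blast
    moreover have "orbit_of \<gamma> \<subseteq> f ` closure (orbit_of \<gamma>)"
      using image_orbit_of closure_subset by blast
    ultimately show "closure (orbit_of \<gamma>) \<subseteq> f ` closure (orbit_of \<gamma>)"
      by (rule closure_minimal[rotated])
  qed
qed

end

lemma uncountable_continua_along_arc:
  assumes P: "P \<in> continua M" "f ` P = P" "p \<in> P" "q \<in> P"
    and \<alpha>: "arc \<alpha>" "path_image \<alpha> \<subseteq> stable_set M f p \<inter> unstable_set M f q"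
      "pathstart \<alpha> \<in> P" "pathfinish \<alpha> \<notin> P"
  shows "uncountable {K. K \<in> continuum_nonwandering M f \<and> continuum_homoclinic M f K}"
proof -
  have "closed P"
    using P(1) by (simp add: continua_def compact_imp_closed)
  then obtain s0 where s0: "0 \<le> s0" "s0 < 1" "\<And>s. s0 < s \<Longrightarrow> s \<le> 1 \<Longrightarrow> \<alpha> s \<notin> P"
    and inj: "inj_on (\<lambda>s. P \<union> \<alpha> ` {0..s}) {s0<..1}"
    using arc_initial_segments_inj[OF \<alpha>(1) _ \<alpha>(3,4)] by blast
  have "P \<union> \<alpha> ` {0..s} \<in> continuum_nonwandering M f \<and> continuum_homoclinic M f (P \<union> \<alpha> ` {0..s})"
    if s: "s \<in> {s0<..1}" for s
  proof -
    define A where "A = \<alpha> ` {0..s}"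
    have "continuous_on {0..s} \<alpha>"
      using \<alpha>(1) s by (auto simp: arc_def path_def intro: continuous_on_subset)
    then have A: "compact A" "connected A"
      unfolding A_def by (auto intro: compact_continuous_image connected_continuous_image)
    have AW: "A \<subseteq> stable_set M f p \<inter> unstable_set M f q"
      using \<alpha>(2) s by (auto simp: A_def path_image_def)
    have "\<alpha> 0 \<in> A \<inter> P"
      using \<alpha>(3) s s0(1) by (auto simp: A_def pathstart_def)
    then have meet: "A \<inter> P \<noteq> {}"
      by blast
    have "\<alpha> s \<in> A - P"
      using s s0 by (auto simp: A_def)
    then have new: "P \<union> A \<noteq> P"
      by blast
    have "P \<union> A \<in> continua M"
      using continua_Un[OF P(1) _ A meet] AW stable_Int_unstable_subset by blast
    then show ?thesis
      using nonwandering_Un[OF P A AW meet] homoclinic_Un[OF P A(1) AW new] by (simp add: A_def)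
  qed
  then have "(\<lambda>s. P \<union> \<alpha> ` {0..s}) ` {s0<..1}
      \<subseteq> {K. K \<in> continuum_nonwandering M f \<and> continuum_homoclinic M f K}"
    by blast
  moreover have "uncountable ((\<lambda>s. P \<union> \<alpha> ` {0..s}) ` {s0<..1})"
    using inj s0(2) uncountable_half_open_interval_2 countable_image_inj_on by blast
  ultimately show ?thesis
    using countable_subset by blast
qed

theorem uncountable_homoclinic_nonwandering_continua:
  assumes "DIM('m::euclidean_space) \<ge> 2" "submanifold_without_boundary TYPE('m) M"
    and g: "arc g" "path_image g \<subseteq> stable_set M f p \<inter> unstable_set M f q"
      "pathstart g = x" "pathfinish g = f x"
  shows "uncountable {K. K \<in> continuum_nonwandering M f \<and> continuum_homoclinic M f K}"
proof -
  define \<gamma> where "\<gamma> = path_image g"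
  have \<gamma>: "compact \<gamma>" "connected \<gamma>" "\<gamma> \<subseteq> stable_set M f p \<inter> unstable_set M f q" "x \<in> \<gamma>" "f x \<in> \<gamma>"
    using g compact_arc_image connected_arc_image pathstart_in_path_image[of g]
      pathfinish_in_path_image[of g]
    by (auto simp: \<gamma>_def)
  define P where "P = closure (orbit_of \<gamma>)"
  note P = closure_orbit_of_continuum[OF \<gamma>, folded P_def]
    fixed_points_in_closure_orbit_of[OF \<gamma>, folded P_def]
  have PC: "P \<subseteq> \<Union>(orbit_pieces \<gamma>)"
    using closure_orbit_of_subset[OF \<gamma>] orbit_of_subset_orbit_pieces unfolding P_def by blast
  have "x \<in> orbit_of \<gamma>"
    unfolding orbit_of_def using \<gamma>(4) by (intro UnI1 UN_I[of 0]) auto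
  then have xP: "x \<in> P"
    unfolding P_def using closure_subset by blast
  have "\<And>C. C \<in> orbit_pieces \<gamma> \<Longrightarrow> arc_or_point C"
    using arc_or_point_orbit_pieces[OF g(1)] g(2) stable_Int_unstable_subset unfolding \<gamma>_def by blast
  then obtain \<alpha> where \<alpha>: "arc \<alpha>" "pathstart \<alpha> = x"
    "path_image \<alpha> \<subseteq> stable_set M f p \<inter> unstable_set M f q" "pathfinish \<alpha> \<notin> \<Union>(orbit_pieces \<gamma>)"
    using exists_arc_leaving_countable_arcs[OF assms(1,2) openin_stable_Int_unstable _ _
        countable_orbit_pieces] \<gamma>(3,4) xP PC by blast
  have "pathfinish \<alpha> \<notin> P"
    using \<alpha>(4) PC by blast
  then show ?thesis
    using uncountable_continua_along_arc[OF P \<alpha>(1,3)] \<alpha>(2) xP by blast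
qed

end

lemma homeomorphism_of_C1_diffeomorphism:
  fixes M :: "'a::euclidean_space set"
  assumes "submanifold_without_boundary TYPE('m::euclidean_space) M" "C1_diffeomorphism TYPE('m) M f"
  shows "homeomorphism M M f (inv_into M f)"
proof -
  have "bij_betw f M M" "continuous_on M f" "continuous_on M (inv_into M f)"
    using assms continuous_on_C1_on_manifold by (auto simp: C1_diffeomorphism_def)
  then show ?thesis
    using bij_betw_inv_into[of f M M]
    by (simp add: homeomorphism_def bij_betw_imp_surj_on bij_betw_inv_into_left bij_betw_inv_into_right)
qed

lemma periodic_point_fixed_if_unstable:
  assumes homeo: "homeomorphism M M f (inv_into M f)"
    and "k > 0" "(f ^^ k) q = q" "q \<in> M"
    and "y \<in> unstable_set M f q" "f y \<in> unstable_set M f q"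
  shows "f q = q"
proof -
  have "y \<in> M"
    using assms(5) by (simp add: unstable_set_def stable_set_def)
  have "(inv_into M f ^^ k) q = q"
    using homeomorphism_apply1[OF homeomorphism_funpow[OF homeo, of k] assms(4)] assms(3) by simp
  moreover have "inv_into M f (f y) = y"
    using homeomorphism_apply1[OF homeo \<open>y \<in> M\<close>] .
  ultimately have "inv_into M f q = q"
    using periodic_point_fixed_if_stable[OF assms(2), of "inv_into M f" q "f y" M] assms(5,6)
    unfolding unstable_set_def by simp
  then show ?thesis
    using homeomorphism_apply2[OF homeo assms(4)] by simp
qed

theorem proposition3p4:
  fixes M :: "'a::euclidean_space set" and f :: "'a \<Rightarrow> 'a" and p q x :: 'a
  assumes "DIM('m::euclidean_space) \<ge> 2"
    and "closed_manifold TYPE('m) M"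
    and "Morse_Smale TYPE('m) M f"
    and "attractor_periodic_point M f p"
    and "repeller_periodic_point M f q"
    and "x \<in> stable_set M f p \<inter> unstable_set M f q"
    and "arc g" and "path_image g \<subseteq> stable_set M f p \<inter> unstable_set M f q"
    and "pathstart g = x" and "pathfinish g = f x"
  shows "uncountable {K. K \<in> continuum_nonwandering M f \<and> continuum_homoclinic M f K}"
proof -
  have sm: "submanifold_without_boundary TYPE('m) M" and "compact M"
    using assms(2) by (auto simp: closed_manifold_def)
  have diffeo: "C1_diffeomorphism TYPE('m) M f"
    using assms(3) by (simp add: Morse_Smale_def)
  then have homeo: "homeomorphism M M f (inv_into M f)"
    by (rule homeomorphism_of_C1_diffeomorphism[OF sm])
  have fx: "f x \<in> stable_set M f p \<inter> unstable_set M f q"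
    using assms(8) pathfinish_in_path_image[of g] unfolding assms(10) by blast
  obtain kp where kp: "kp > 0" "(f ^^ kp) p = p"
    using assms(4) unfolding attractor_periodic_point_def by blast
  obtain kq where kq: "kq > 0" "(f ^^ kq) q = q" "q \<in> M"
    using assms(5) unfolding repeller_periodic_point_def by blast
  have "f p = p"
    using periodic_point_fixed_if_stable[OF kp] assms(6) fx by blast
  moreover have "f q = q"
    using periodic_point_fixed_if_unstable[OF homeo kq] assms(6) fx by blast
  moreover have "C1_on_manifold TYPE('m) M f"
    using diffeo by (simp add: C1_diffeomorphism_def)
  ultimately have "\<exists>U. uniformly_attracting_nbhd M f p U"
    "\<exists>U. uniformly_attracting_nbhd M (inv_into M f) q U"
    using uniformly_attracting_nbhd_at_attractor[OF sm _ _ assms(4)]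
      uniformly_attracting_nbhd_at_repeller[OF sm diffeo _ assms(5)] by blast+
  then interpret attractor_repeller_pair M f p q
    using \<open>compact M\<close> homeo by unfold_locales
  show ?thesis
    using uncountable_homoclinic_nonwandering_continua[OF assms(1) sm assms(7-10)] .
qed

end
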